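(* Let $\lambda>0$, $\gamma>0$, and let $\beta_1=\beta_1(\gamma)$ be the unique positive solution of $\frac{\sqrt\pi}{2}\gamma x(1+x)^{1/2}(3+x)=1$. If $0\le\beta<\beta_1$, then the problem \begin{align*} &[(1+\beta y(\eta))y'(\eta)]'+2\eta y'(\eta)=0, \quad 0<\eta<\lambda,\\ &y'(0)+\beta y(0)y'(0)-\gamma y(0)=0,\\ &y(\lambda)=1, \end{align*} has a unique non-negative analytic solution $y:[0,\lambda]\to\mathbb{R}$.
   Context: The solution is called the generalized modified error (GME) function. *)

theory Defs
  imports "HOL-Analysis.Analysis"
begin

definition real_analytic_on :: "(real \<Rightarrow> real) \<Rightarrow> real set \<Rightarrow> bool" where
  "real_analytic_on y S \<longleftrightarrow>
     (\<forall>x\<in>S. \<exists>r>0. \<exists>a::nat \<Rightarrow> real.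
        \<forall>t\<in>S. \<bar>t - x\<bar> < r \<longrightarrow> (\<lambda>n. a n * (t - x) ^ n) sums y t)"

definition solves_problem :: "real \<Rightarrow> real \<Rightarrow> real \<Rightarrow> (real \<Rightarrow> real) \<Rightarrow> bool" where
  "solves_problem lam \<beta> \<gamma> y \<longleftrightarrow>
     (\<exists>y'. (\<forall>\<eta>\<in>{0..lam}. (y has_real_derivative y' \<eta>) (at \<eta> within {0..lam}))
        \<and> (\<forall>\<eta>\<in>{0<..<lam}.
              ((\<lambda>t. (1 + \<beta> * y t) * y' t) has_real_derivative (- 2 * \<eta> * y' \<eta>)) (at \<eta>))
        \<and> y' 0 + \<beta> * y 0 * y' 0 - \<gamma> * y 0 = 0
        \<and> y lam = 1)"

end

theory Submission
  imports Defs "HOL-Complex_Analysis.Complex_Analysis"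
begin

text \<open>Write \<open>F = (1 + \<beta> y) y'\<close> for the flux. The equation says \<open>F' = - 2 \<eta> F / (1 + \<beta> y)\<close>,
  and the boundary condition at 0 says \<open>F(0) = \<gamma> y(0)\<close>; hence a solution with \<open>y(0) = a\<close> solves
  the fixed point equation
  \<open>y(\<eta>) = a + \<gamma> a \<integral>\<^sub>0\<^sup>\<eta> exp (- 2 \<integral>\<^sub>0\<^sup>s t / (1 + \<beta> y(t)) dt) / (1 + \<beta> y(s)) ds\<close>.
  For \<open>0 \<le> a \<le> 1\<close> this equation is solved by Picard iteration among functions that are
  holomorphic on a thin complex rectangle around \<open>[0, \<lambda>]\<close>: in the sup norm weighted by
  \<open>exp (K \<bar>z\<bar>)\<close> the iteration is a contraction, and the fixed point is analytic. Its value at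
  \<open>\<lambda>\<close> depends continuously on \<open>a\<close>, vanishes for \<open>a = 0\<close> and is at least 1 for \<open>a = 1\<close>, so some
  \<open>a\<close> gives \<open>y(\<lambda>) = 1\<close>.

  For uniqueness, integrating the equation once gives
  \<open>(1 + \<beta> y) y' = \<gamma> y(0) - 2 \<eta> y + 2 \<integral>\<^sub>0\<^sup>\<eta> y\<close>. If two nonnegative solutions had
  \<open>y(0) < z(0)\<close>, then at the first point where \<open>z\<close> comes down to \<open>y\<close> this identity would
  force \<open>z' > y'\<close>, which is impossible; and if \<open>y(0) = z(0)\<close>, a Gronwall argument gives \<open>y = z\<close>.\<close>

lemma geometric_increments_converge:
  fixes f :: "nat \<Rightarrow> 'a::banach"
  assumes inc: "\<And>n. norm (f (Suc n) - f n) \<le> C * q ^ n" and q: "0 \<le> q" "q < 1"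
  obtains l where "f \<longlonglongrightarrow> l" "\<And>n. norm (l - f n) \<le> C * q ^ n / (1 - q)"
proof
  let ?d = "\<lambda>n. f (Suc n) - f n"
  have sg: "summable (\<lambda>n. C * q ^ n)"
    using q by (intro summable_mult summable_geometric) simp
  have sd: "summable ?d"
    by (rule summable_comparison_test'[OF sg]) (use inc in auto)
  have "(\<lambda>n. f 0 + (\<Sum>i<n. ?d i)) \<longlonglongrightarrow> f 0 + suminf ?d"
    by (intro tendsto_add tendsto_const summable_LIMSEQ sd)
  then show "f \<longlonglongrightarrow> f 0 + suminf ?d"
    by (simp add: sum_lessThan_telescope)
  fix n
  have "f 0 + suminf ?d - f n = (\<Sum>i. ?d (i + n))"
    using suminf_split_initial_segment[OF sd, of n] by (simp add: sum_lessThan_telescope)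
  also have "norm \<dots> \<le> (\<Sum>i. C * q ^ n * q ^ i)"
  proof (rule norm_suminf_le)
    show "norm (?d (i + n)) \<le> C * q ^ n * q ^ i" for i
      using inc[of "i + n"] by (simp add: power_add mult_ac)
    show "summable (\<lambda>i. C * q ^ n * q ^ i)"
      using q by (intro summable_mult summable_geometric) simp
  qed
  also have "\<dots> = C * q ^ n / (1 - q)"
    using q by (simp add: suminf_mult suminf_geometric)
  finally show "norm (f 0 + suminf ?d - f n) \<le> C * q ^ n / (1 - q)" .
qed

lemma has_field_derivative_linepath_integral:
  fixes f :: "complex \<Rightarrow> complex"
  assumes "convex S" "open S" "0 \<in> S" "f holomorphic_on S" "z \<in> S"
  shows "((\<lambda>z. contour_integral (linepath 0 z) f) has_field_derivative f z) (at z)"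
proof -
  obtain g where g: "\<And>x. x \<in> S \<Longrightarrow> (g has_field_derivative f x) (at x within S)"
    using holomorphic_convex_primitive'[OF assms(1,2,4)] by blast
  have eq: "contour_integral (linepath 0 w) f = g w - g 0" if "w \<in> S" for w
  proof -
    have "closed_segment 0 w \<subseteq> S"
      using assms(1,3) that by (simp add: closed_segment_subset)
    then have "(f has_contour_integral (g w - g 0)) (linepath 0 w)"
      using contour_integral_primitive[of S g f "linepath 0 w", OF g] by auto
    then show ?thesis by (rule contour_integral_unique)
  qed
  have "(g has_field_derivative f z) (at z)"
    using g[OF assms(5)] at_within_open[OF assms(5,2)] by simp
  then have "((\<lambda>w. g w - g 0) has_field_derivative f z) (at z)"
    using DERIV_diff[OF _ DERIV_const] by fastforce
  then show ?thesis
    by (rule has_field_derivative_transform_within_open[where S=S]) (use assms(2,5) eq in simp_all)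
qed

lemma linepath_integral_real_nonneg:
  fixes f :: "complex \<Rightarrow> complex"
  assumes "x \<ge> 0" "continuous_on (closed_segment 0 (of_real x)) f"
    and "\<And>t. 0 \<le> t \<Longrightarrow> t \<le> x \<Longrightarrow> Im (f (of_real t)) = 0 \<and> 0 \<le> Re (f (of_real t))"
  shows "Im (contour_integral (linepath 0 (of_real x)) f) = 0
    \<and> 0 \<le> Re (contour_integral (linepath 0 (of_real x)) f)"
proof -
  let ?I = "contour_integral (linepath 0 (of_real x)) f"
  have "(f has_contour_integral ?I) (linepath 0 (of_real x))"
    by (rule has_contour_integral_integral[OF contour_integrable_continuous_linepath[OF assms(2)]])
  then have hi: "((\<lambda>u. f (of_real (u * x)) * of_real x) has_integral ?I) {0..1}"
    by (simp add: has_contour_integral_linepath scaleR_conv_of_real)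
  have pt: "Im (f (of_real (u * x))) = 0 \<and> 0 \<le> Re (f (of_real (u * x)))" if "u \<in> {0..1}" for u
    using that assms(1) by (intro assms(3)) (auto intro: mult_left_le_one_le)
  have "((\<lambda>u. Im (f (of_real (u * x)) * of_real x)) has_integral Im ?I) {0..1}"
    using has_integral_linear[OF hi bounded_linear_Im] by (simp add: o_def)
  moreover have "((\<lambda>u. Im (f (of_real (u * x)) * of_real x)) has_integral 0) {0..1}"
    by (rule has_integral_eq[rotated, OF has_integral_0]) (use pt in auto)
  ultimately have "Im ?I = 0" by (rule has_integral_unique)
  moreover have "((\<lambda>u. Re (f (of_real (u * x)) * of_real x)) has_integral Re ?I) {0..1}"
    using has_integral_linear[OF hi bounded_linear_Re] by (simp add: o_def)
  then have "0 \<le> Re ?I"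
    by (rule has_integral_nonneg) (use pt assms(1) in auto)
  ultimately show ?thesis by simp
qed

lemma norm_exp_diff_le:
  fixes a b :: complex
  assumes "Re a \<le> M" "Re b \<le> M"
  shows "norm (exp a - exp b) \<le> exp M * norm (a - b)"
proof (rule field_differentiable_bound[of "{z. Re z \<le> M}" exp exp])
  show "(exp has_field_derivative exp z) (at z within {z. Re z \<le> M})" for z
    by (rule DERIV_subset[OF DERIV_exp]) auto
qed (use assms convex_halfspace_Re_le in auto)

lemma norm_linepath_integral_le_exp:
  fixes f :: "complex \<Rightarrow> complex"
  assumes cont: "continuous_on (closed_segment 0 z) f" and "c \<ge> 0" "K > 0"
    and bound: "\<And>t. t \<in> closed_segment 0 z \<Longrightarrow> norm (f t) \<le> c * exp (K * norm t)"
  shows "norm (contour_integral (linepath 0 z) f) \<le> c * exp (K * norm z) / K"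
proof -
  let ?I = "contour_integral (linepath 0 z) f"
  have "(f has_contour_integral ?I) (linepath 0 z)"
    by (rule has_contour_integral_integral[OF contour_integrable_continuous_linepath[OF cont]])
  then have hi: "((\<lambda>u. f (linepath 0 z u) * z) has_integral ?I) {0..1}"
    by (simp add: has_contour_integral_linepath)
  define g where "g u = c * exp (K * u * norm z) * norm z" for u
  define G where "G u = c * exp (K * u * norm z) / K" for u
  have "(g has_integral G 1 - G 0) {0..1}"
  proof (rule fundamental_theorem_of_calculus)
    show "(G has_vector_derivative g u) (at u within {0..1})" for u
      unfolding G_def g_def has_real_derivative_iff_has_vector_derivative[symmetric]
      using \<open>K > 0\<close> by (auto intro!: derivative_eq_intros simp: field_simps)
  qed simp
  moreover have "norm (f (linepath 0 z u) * z) \<le> g u" if "u \<in> {0..1}" for u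
  proof -
    have "linepath 0 z u \<in> closed_segment 0 z"
      using that by (metis linepath_image_01 image_eqI)
    moreover have "norm (linepath 0 z u) = u * norm z"
      using that by (simp add: linepath_def norm_mult)
    ultimately have "norm (f (linepath 0 z u)) \<le> c * exp (K * (u * norm z))"
      using bound by metis
    then show ?thesis
      unfolding g_def norm_mult mult.assoc[of K u] by (rule mult_right_mono) simp
  qed
  ultimately have "norm ?I \<le> G 1 - G 0"
    using integral_norm_bound_integral[OF has_integral_integrable[OF hi] has_integral_integrable]
      integral_unique[OF hi] by (metis integral_unique)
  also have "\<dots> \<le> c * exp (K * norm z) / K"
    using assms(2,3) by (simp add: G_def divide_right_mono)
  finally show ?thesis .
qed

lemma has_real_derivative_Re_of_real:
  assumes "(v has_field_derivative v') (at (of_real t))"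
  shows "((\<lambda>x. Re (v (of_real x))) has_real_derivative Re v') (at t within S)"
  by (rule has_field_derivative_Re[OF has_vector_derivative_real_field[OF assms]])

lemma real_analytic_on_Re_holomorphic:
  assumes "open U" "v holomorphic_on U" "of_real ` S \<subseteq> U"
  shows "real_analytic_on (\<lambda>t. Re (v (of_real t))) S"
  unfolding real_analytic_on_def
proof
  fix x assume "x \<in> S"
  then obtain r where r: "r > 0" "ball (of_real x) r \<subseteq> U"
    using assms(1,3) open_contains_ball by blast
  have hb: "v holomorphic_on ball (of_real x) r"
    using assms(2) r(2) holomorphic_on_subset by blast
  define c where "c n = Re ((deriv ^^ n) v (of_real x) / fact n)" for n
  have "(\<lambda>n. c n * (t - x) ^ n) sums Re (v (of_real t))" if "\<bar>t - x\<bar> < r" for t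
  proof -
    have "dist (of_real x :: complex) (of_real t) < r"
      using that by (simp add: dist_norm abs_minus_commute flip: of_real_diff)
    then have "(\<lambda>n. (deriv ^^ n) v (of_real x) / fact n * (of_real t - of_real x) ^ n)
        sums v (of_real t)"
      by (intro holomorphic_power_series[OF hb]) simp
    moreover have "Re ((deriv ^^ n) v (of_real x) / fact n * (of_real t - of_real x) ^ n)
        = c n * (t - x) ^ n" for n
    proof -
      have "Re (w * of_real r) = Re w * r" for w :: complex and r
        by simp
      then show ?thesis
        unfolding c_def of_real_diff[symmetric] of_real_power[symmetric] .
    qed
    ultimately show ?thesis
      using sums_Re by fastforce
  qed
  then show "\<exists>r>0. \<exists>c. \<forall>t\<in>S. \<bar>t - x\<bar> < r \<longrightarrow> (\<lambda>n. c n * (t - x) ^ n) sums Re (v (of_real t))"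
    using r(1) by blast
qed

lemma first_zero_after_positive:
  fixes d :: "real \<Rightarrow> real"
  assumes "continuous_on {a..b} d" "d a > 0" "d b = 0" "a \<le> b"
  obtains e where "a < e" "e \<le> b" "d e = 0" "\<And>s. a \<le> s \<Longrightarrow> s < e \<Longrightarrow> d s > 0"
proof -
  define Z where "Z = {s \<in> {a..b}. d s = 0}"
  have "closed Z"
    unfolding Z_def by (rule continuous_closed_preimage_constant[OF assms(1)]) simp
  moreover have "b \<in> Z" "bdd_below Z"
    using assms(3,4) by (auto simp: Z_def intro: bdd_belowI[of _ a])
  ultimately have eZ: "Inf Z \<in> Z" and low: "\<And>s. s \<in> Z \<Longrightarrow> Inf Z \<le> s"
    by (auto intro: closed_contains_Inf cInf_lower)
  have pos: "d s > 0" if s: "a \<le> s" "s < Inf Z" for s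
  proof (rule ccontr)
    assume "\<not> d s > 0"
    moreover have "continuous_on {a..s} d"
      using assms(1) s eZ by (auto simp: Z_def elim: continuous_on_subset)
    ultimately obtain t where "a \<le> t" "t \<le> s" "d t = 0"
      using IVT2'[of d s 0 a] assms(2) s by auto
    then have "t \<in> Z" using s eZ by (auto simp: Z_def)
    then show False using low[of t] \<open>t \<le> s\<close> s by simp
  qed
  have "a \<noteq> Inf Z" using eZ assms(2) by (auto simp: Z_def)
  then show ?thesis
    using that[of "Inf Z"] eZ pos by (auto simp: Z_def)
qed

lemma derivative_nonpos_at_first_zero:
  fixes d :: "real \<Rightarrow> real"
  assumes der: "(d has_real_derivative D) (at e within {a..b})"
    and "a < e" "e \<le> b" "d e = 0" and pos: "\<And>s. a \<le> s \<Longrightarrow> s < e \<Longrightarrow> d s > 0"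
  shows "D \<le> 0"
proof (rule ccontr)
  assume "\<not> D \<le> 0"
  then obtain \<epsilon> where "\<epsilon> > 0"
    and dec: "\<And>h. h > 0 \<Longrightarrow> e - h \<in> {a..b} \<Longrightarrow> h < \<epsilon> \<Longrightarrow> d (e - h) < d e"
    using has_real_derivative_pos_inc_left[OF der] by auto
  define h where "h = min (\<epsilon> / 2) (e - a)"
  have "h > 0" "h < \<epsilon>" "h \<le> e - a"
    using \<open>\<epsilon> > 0\<close> \<open>a < e\<close> by (auto simp: h_def)
  then show False
    using dec[of h] pos[of "e - h"] assms(3,4) by auto
qed

lemma integral_gronwall_zero:
  fixes f :: "real \<Rightarrow> real"
  assumes cont: "continuous_on {a..b} f" and nonneg: "\<And>x. x \<in> {a..b} \<Longrightarrow> 0 \<le> f x"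
    and "0 \<le> L" and le: "\<And>x. x \<in> {a..b} \<Longrightarrow> f x \<le> L * integral {a..x} f"
    and x: "x \<in> {a..b}"
  shows "f x = 0"
proof -
  define W where "W s = integral {a..s} f" for s
  have Wd: "(W has_real_derivative f s) (at s within {a..b})" if "s \<in> {a..b}" for s
    unfolding W_def by (rule integral_has_real_derivative[OF cont that])
  have W_nonneg: "W s \<ge> 0" if "s \<in> {a..b}" for s
    unfolding W_def using that nonneg
    by (intro integral_nonneg integrable_continuous_real continuous_on_subset[OF cont]) auto
  define G where "G s = W s * exp (- L * s)" for s
  have "((\<lambda>s. exp (- L * s) * (f s - L * W s)) has_integral G x - G a) {a..x}"
  proof (rule fundamental_theorem_of_calculus)
    fix s assume "s \<in> {a..x}"
    then have "(G has_real_derivative exp (- L * s) * (f s - L * W s)) (at s within {a..b})"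
      unfolding G_def using x
      by (auto intro!: derivative_eq_intros Wd simp: algebra_simps)
    then show "(G has_vector_derivative exp (- L * s) * (f s - L * W s)) (at s within {a..x})"
      using x by (auto simp: has_real_derivative_iff_has_vector_derivative
          intro: has_vector_derivative_within_subset)
  qed (use x in simp)
  then have "G x - G a \<le> 0"
    by (rule has_integral_le[OF _ has_integral_0]) (use x le in \<open>auto simp: W_def mult_nonneg_nonpos\<close>)
  then have "W x \<le> 0"
    by (simp add: G_def W_def mult_le_0_iff)
  then show ?thesis
    using le[OF x] nonneg[OF x] W_nonneg[OF x] \<open>0 \<le> L\<close> by (simp add: W_def mult_le_0_iff)
qed

lemma has_real_derivative_eq_continuous_extension:
  fixes y y' H :: "real \<Rightarrow> real"
  assumes "a < b" and der: "\<And>x. x \<in> {a..b} \<Longrightarrow> (y has_real_derivative y' x) (at x within {a..b})"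
    and "continuous_on {a..b} H" and eq: "\<And>x. x \<in> {a<..<b} \<Longrightarrow> y' x = H x"
    and x: "x \<in> {a..b}"
  shows "y' x = H x"
proof -
  define Z where "Z x = y a + integral {a..x} H" for x
  have Zd: "(Z has_real_derivative H s) (at s within {a..b})" if "s \<in> {a..b}" for s
    unfolding Z_def using integral_has_real_derivative[OF assms(3) that]
    by (intro DERIV_add[OF DERIV_const, simplified])
  have at: "at s within {a..b} = at s" if "s \<in> {a<..<b}" for s
    using that by (simp add: at_within_Icc_at)
  have "y s = Z s" if "s \<in> {a..b}" for s
  proof (cases "s = a")
    case False
    have "(\<lambda>t. y t - Z t) s = (\<lambda>t. y t - Z t) a"
    proof (rule DERIV_isconst_end[where f = "\<lambda>t. y t - Z t"])
      show "continuous_on {a..s} (\<lambda>t. y t - Z t)"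
        using that DERIV_continuous_on[OF der] DERIV_continuous_on[OF Zd]
        by (intro continuous_intros) (auto elim: continuous_on_subset)
      fix t assume "a < t" "t < s"
      then have t: "t \<in> {a<..<b}" using that by auto
      then show "((\<lambda>t. y t - Z t) has_real_derivative 0) (at t)"
        using DERIV_diff[OF der Zd, of t] eq[OF t] at[OF t] by simp
    qed (use that False in auto)
    then show ?thesis by (simp add: Z_def)
  qed (simp add: Z_def)
  then have "(y has_real_derivative H x) (at x within {a..b})"
    by (intro has_field_derivative_transform_within[OF Zd[OF x] zero_less_one x]) simp
  then show ?thesis
    using der[OF x] vector_derivative_unique_within_closed_interval[of a b x y] \<open>a < b\<close> x
    by (auto simp: has_real_derivative_iff_has_vector_derivative)
qed

lemma abs_le_integral_of_derivative_bound:
  fixes d d' :: "real \<Rightarrow> real"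
  assumes der: "\<And>x. x \<in> {0..l} \<Longrightarrow> (d has_real_derivative d' x) (at x within {0..l})"
    and "d 0 = 0" "0 \<le> K"
    and bound: "\<And>x. x \<in> {0..l} \<Longrightarrow> \<bar>d' x\<bar> \<le> L * \<bar>d x\<bar> + K * integral {0..x} (\<lambda>t. \<bar>d t\<bar>)"
    and \<eta>: "\<eta> \<in> {0..l}"
  shows "\<bar>d \<eta>\<bar> \<le> (L + K * l) * integral {0..\<eta>} (\<lambda>t. \<bar>d t\<bar>)"
proof -
  define W where "W x = integral {0..x} (\<lambda>t. \<bar>d t\<bar>)" for x
  have sub: "{0..\<eta>} \<subseteq> {0..l}" using \<eta> by auto
  have dc: "continuous_on {0..\<eta>} d"
    using DERIV_continuous_on[OF der] sub by (rule continuous_on_subset)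
  then have int: "(\<lambda>t. \<bar>d t\<bar>) integrable_on {0..s}" if "s \<in> {0..\<eta>}" for s
    using that by (intro integrable_continuous_real continuous_intros) (auto elim: continuous_on_subset)
  have int_L: "(\<lambda>s. L * \<bar>d s\<bar>) integrable_on {0..\<eta>}"
    using dc by (intro integrable_continuous_real continuous_intros)
  have "(d' has_integral d \<eta> - d 0) {0..\<eta>}"
  proof (rule fundamental_theorem_of_calculus)
    fix s assume "s \<in> {0..\<eta>}"
    then show "(d has_vector_derivative d' s) (at s within {0..\<eta>})"
      using der[of s] sub by (auto simp: has_real_derivative_iff_has_vector_derivative
          intro: has_vector_derivative_within_subset)
  qed (use \<eta> in simp)
  then have ftc: "(d' has_integral d \<eta>) {0..\<eta>}"
    using \<open>d 0 = 0\<close> by simp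
  have "\<bar>d \<eta>\<bar> \<le> integral {0..\<eta>} (\<lambda>s. L * \<bar>d s\<bar> + K * W \<eta>)"
  proof (rule integral_norm_bound_integral[OF has_integral_integrable[OF ftc] _,
        unfolded integral_unique[OF ftc] real_norm_def])
    show "(\<lambda>s. L * \<bar>d s\<bar> + K * W \<eta>) integrable_on {0..\<eta>}"
      using int_L by (intro integrable_add) auto
    fix s assume s: "s \<in> {0..\<eta>}"
    have "K * W s \<le> K * W \<eta>"
      unfolding W_def using s int \<open>0 \<le> K\<close> by (intro mult_left_mono integral_subset_le) auto
    then show "\<bar>d' s\<bar> \<le> L * \<bar>d s\<bar> + K * W \<eta>"
      using bound[of s, folded W_def] s sub by auto
  qed
  also have "\<dots> = L * W \<eta> + \<eta> * (K * W \<eta>)"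
    using \<eta> by (simp add: integral_add[OF int_L integrable_const_ivl] W_def)
  also have "\<dots> \<le> (L + K * l) * W \<eta>"
    using integral_nonneg[OF int[of \<eta>]] \<eta> \<open>0 \<le> K\<close>
    by (simp add: W_def algebra_simps mult_right_mono mult_left_mono)
  finally show ?thesis
    by (simp add: W_def)
qed

lemma derivative_bound_gronwall_zero:
  fixes d d' :: "real \<Rightarrow> real"
  assumes der: "\<And>x. x \<in> {0..l} \<Longrightarrow> (d has_real_derivative d' x) (at x within {0..l})"
    and "d 0 = 0" "0 \<le> L" "0 \<le> K"
    and bound: "\<And>x. x \<in> {0..l} \<Longrightarrow> \<bar>d' x\<bar> \<le> L * \<bar>d x\<bar> + K * integral {0..x} (\<lambda>t. \<bar>d t\<bar>)"
    and x: "x \<in> {0..l}"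
  shows "d x = 0"
proof -
  have "continuous_on {0..l} (\<lambda>t. \<bar>d t\<bar>)"
    using DERIV_continuous_on[OF der] by (intro continuous_intros)
  then have "\<bar>d x\<bar> = 0"
    using abs_le_integral_of_derivative_bound[OF der \<open>d 0 = 0\<close> \<open>0 \<le> K\<close> bound] x assms(3,4)
    by (intro integral_gronwall_zero[where L = "L + K * l"]) auto
  then show ?thesis by simp
qed

lemma abs_quotient_diff_le:
  fixes p q N A :: real
  assumes "1 \<le> p" "1 \<le> q"
  shows "\<bar>(N + A) / p - N / q\<bar> \<le> \<bar>A\<bar> + \<bar>N\<bar> * \<bar>q - p\<bar>"
proof -
  have "(N + A) / p - N / q = A / p + N * (q - p) / (p * q)"
    using assms by (simp add: field_simps)
  also have "\<bar>\<dots>\<bar> \<le> \<bar>A / p\<bar> + \<bar>N * (q - p) / (p * q)\<bar>"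
    by (rule abs_triangle_ineq)
  also have "\<dots> = \<bar>A\<bar> / p + \<bar>N * (q - p)\<bar> / (p * q)"
    using assms by (simp add: abs_divide)
  also have "\<dots> \<le> \<bar>A\<bar> + \<bar>N * (q - p)\<bar>"
  proof -
    have le_self: "X / r \<le> X" if "1 \<le> r" "0 \<le> X" for X r :: real
      using that mult_left_mono[of 1 r X] by (simp add: divide_le_eq)
    have "1 \<le> p * q"
      using assms mult_mono[of 1 p 1 q] by simp
    then show ?thesis
      using assms by (intro add_mono le_self) auto
  qed
  finally show ?thesis by (simp add: abs_mult)
qed

section \<open>Uniqueness\<close>

definition integrated_problem ::
  "real \<Rightarrow> real \<Rightarrow> real \<Rightarrow> (real \<Rightarrow> real) \<Rightarrow> (real \<Rightarrow> real) \<Rightarrow> bool" where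
  "integrated_problem lam \<beta> \<gamma> y y' \<longleftrightarrow>
     (\<forall>\<eta>\<in>{0..lam}. (y has_real_derivative y' \<eta>) (at \<eta> within {0..lam}))
     \<and> (\<forall>\<eta>\<in>{0..lam}. (1 + \<beta> * y \<eta>) * y' \<eta> = \<gamma> * y 0 - 2 * \<eta> * y \<eta> + 2 * integral {0..\<eta>} y)
     \<and> (\<forall>\<eta>\<in>{0..lam}. y \<eta> \<ge> 0)"

lemma integrated_problem_continuous:
  "integrated_problem lam \<beta> \<gamma> y y' \<Longrightarrow> continuous_on {0..lam} y"
  unfolding integrated_problem_def by (metis DERIV_continuous_on)

lemma flux_moment_constant:
  fixes y y' :: "real \<Rightarrow> real"
  assumes yd: "\<And>\<eta>. \<eta> \<in> {0..lam} \<Longrightarrow> (y has_real_derivative y' \<eta>) (at \<eta> within {0..lam})"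
    and fd: "\<And>\<eta>. \<eta> \<in> {0<..<lam} \<Longrightarrow>
       ((\<lambda>t. (1 + \<beta> * y t) * y' t) has_real_derivative (- 2 * \<eta> * y' \<eta>)) (at \<eta>)"
  obtains c where "\<And>\<eta>. \<eta> \<in> {0<..<lam} \<Longrightarrow>
    (1 + \<beta> * y \<eta>) * y' \<eta> + 2 * \<eta> * y \<eta> - 2 * integral {0..\<eta>} y = c"
proof -
  define J where "J \<eta> = integral {0..\<eta>} y" for \<eta>
  have "\<exists>c. \<forall>\<eta>\<in>{0<..<lam}. (1 + \<beta> * y \<eta>) * y' \<eta> + 2 * \<eta> * y \<eta> - 2 * J \<eta> = c"
  proof (rule has_field_derivative_zero_constant[OF convex_real_interval(8)])
    fix \<eta> assume \<eta>: "\<eta> \<in> {0<..<lam}"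
    then have "at \<eta> within {0..lam} = at \<eta>"
      by (simp add: at_within_Icc_at)
    then have y1: "(y has_real_derivative y' \<eta>) (at \<eta>)" and J1: "(J has_real_derivative y \<eta>) (at \<eta>)"
      using yd[of \<eta>] integral_has_real_derivative[OF DERIV_continuous_on[OF yd], of \<eta>] \<eta>
      by (auto simp: J_def[abs_def])
    have "((\<lambda>t. (1 + \<beta> * y t) * y' t + 2 * t * y t - 2 * J t) has_real_derivative
        - 2 * \<eta> * y' \<eta> + (2 * y \<eta> + 2 * \<eta> * y' \<eta>) - 2 * y \<eta>) (at \<eta>)"
    proof (intro DERIV_diff DERIV_add fd[OF \<eta>] DERIV_cmult J1)
      show "((\<lambda>t. 2 * t * y t) has_real_derivative 2 * y \<eta> + 2 * \<eta> * y' \<eta>) (at \<eta>)"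
        using DERIV_mult[OF DERIV_cmult[OF DERIV_ident] y1, of 2] by (simp add: mult.commute)
    qed
    then show "((\<lambda>t. (1 + \<beta> * y t) * y' t + 2 * t * y t - 2 * J t) has_real_derivative 0)
        (at \<eta> within {0<..<lam})"
      by (simp add: has_field_derivative_at_within)
  qed
  then show ?thesis
    using that by (auto simp: J_def)
qed

lemma solves_problem_integrated:
  assumes "lam > 0" "\<beta> \<ge> 0" and sol: "solves_problem lam \<beta> \<gamma> y"
    and nonneg: "\<forall>\<eta>\<in>{0..lam}. y \<eta> \<ge> 0"
  obtains y' where "integrated_problem lam \<beta> \<gamma> y y'"
proof -
  obtain y' where yd: "\<And>\<eta>. \<eta> \<in> {0..lam} \<Longrightarrow> (y has_real_derivative y' \<eta>) (at \<eta> within {0..lam})"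
    and fd: "\<And>\<eta>. \<eta> \<in> {0<..<lam} \<Longrightarrow>
       ((\<lambda>t. (1 + \<beta> * y t) * y' t) has_real_derivative (- 2 * \<eta> * y' \<eta>)) (at \<eta>)"
    and bc: "y' 0 + \<beta> * y 0 * y' 0 - \<gamma> * y 0 = 0"
    using sol unfolding solves_problem_def by blast
  obtain c where c: "\<And>\<eta>. \<eta> \<in> {0<..<lam} \<Longrightarrow>
      (1 + \<beta> * y \<eta>) * y' \<eta> + 2 * \<eta> * y \<eta> - 2 * integral {0..\<eta>} y = c"
    using flux_moment_constant[OF yd fd] by blast
  have cont: "continuous_on {0..lam} y"
    by (rule DERIV_continuous_on[OF yd])
  have pos: "1 + \<beta> * y \<eta> > 0" if "\<eta> \<in> {0..lam}" for \<eta>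
    using nonneg that \<open>\<beta> \<ge> 0\<close> by (simp add: add_pos_nonneg)
  define H where "H \<eta> = (c - 2 * \<eta> * y \<eta> + 2 * integral {0..\<eta>} y) / (1 + \<beta> * y \<eta>)" for \<eta>
  \<comment> \<open>The identity holds on the open interval; continuity of \<open>H\<close> carries it to the endpoints.\<close>
  have Hc: "continuous_on {0..lam} H"
    unfolding H_def using pos cont DERIV_continuous_on[OF integral_has_real_derivative[OF cont]]
    by (intro continuous_intros) (auto simp: less_imp_neq[symmetric])
  have y'H: "y' \<eta> = H \<eta>" if "\<eta> \<in> {0..lam}" for \<eta>
  proof (rule has_real_derivative_eq_continuous_extension[OF \<open>lam > 0\<close> yd Hc _ that])
    fix t assume t: "t \<in> {0<..<lam}"
    then have "1 + \<beta> * y t \<noteq> 0"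
      using pos[of t] by auto
    then show "y' t = H t"
      using c[OF t] by (simp add: H_def field_simps)
  qed
  have key: "(1 + \<beta> * y \<eta>) * y' \<eta> = c - 2 * \<eta> * y \<eta> + 2 * integral {0..\<eta>} y"
    if "\<eta> \<in> {0..lam}" for \<eta>
    using y'H[OF that] pos[OF that] by (simp add: H_def)
  have "c = \<gamma> * y 0"
    using key[of 0] \<open>lam > 0\<close> bc by (simp add: algebra_simps)
  then have "integrated_problem lam \<beta> \<gamma> y y'"
    using key yd nonneg by (auto simp: integrated_problem_def)
  then show ?thesis by (rule that)
qed

lemma integrated_problem_start_le:
  assumes "\<beta> \<ge> 0" "\<gamma> > 0"
    and y: "integrated_problem lam \<beta> \<gamma> y y'" and z: "integrated_problem lam \<beta> \<gamma> z z'"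
    and "0 \<le> lam" "y lam = z lam"
  shows "z 0 \<le> y 0"
proof (rule ccontr)
  assume "\<not> z 0 \<le> y 0"
  define d where "d t = z t - y t" for t
  have dc: "continuous_on {0..lam} d"
    unfolding d_def using integrated_problem_continuous[OF y] integrated_problem_continuous[OF z]
    by (intro continuous_intros)
  \<comment> \<open>At the first point where z comes down to y, the graph of z would have to cross y
    with a smaller slope, but the integrated equation says that its slope is larger.\<close>
  obtain e where e: "0 < e" "e \<le> lam" "d e = 0" and pos: "\<And>s. 0 \<le> s \<Longrightarrow> s < e \<Longrightarrow> d s > 0"
    using first_zero_after_positive[OF dc] \<open>\<not> z 0 \<le> y 0\<close> assms(5,6) by (auto simp: d_def)
  have e_in: "e \<in> {0..lam}" using e by simp
  have "0 \<le> integral {0..e} d"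
  proof (rule integral_nonneg)
    show "d integrable_on {0..e}"
      using e by (intro integrable_continuous_real continuous_on_subset[OF dc]) auto
  qed (use pos e in \<open>force simp: le_less\<close>)
  moreover have "integral {0..e} d = integral {0..e} z - integral {0..e} y"
    unfolding d_def using integrated_problem_continuous[OF y] integrated_problem_continuous[OF z] e
    by (intro integral_diff integrable_continuous_real) (auto elim: continuous_on_subset)
  moreover have "(1 + \<beta> * y e) * y' e = \<gamma> * y 0 - 2 * e * y e + 2 * integral {0..e} y"
    and "(1 + \<beta> * z e) * z' e = \<gamma> * z 0 - 2 * e * z e + 2 * integral {0..e} z"
    using y z e_in unfolding integrated_problem_def by blast+
  then have "(1 + \<beta> * y e) * (z' e - y' e)
      = \<gamma> * (z 0 - y 0) + 2 * (integral {0..e} z - integral {0..e} y)"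
    using \<open>d e = 0\<close> by (simp add: d_def algebra_simps)
  moreover have "0 < \<gamma> * (z 0 - y 0)"
    using \<open>\<not> z 0 \<le> y 0\<close> \<open>\<gamma> > 0\<close> by simp
  ultimately have "0 < (1 + \<beta> * y e) * (z' e - y' e)"
    by (metis add_pos_nonneg diff_ge_0_iff_ge mult_2 add_nonneg_nonneg)
  moreover have "1 + \<beta> * y e > 0"
    using y e_in \<open>\<beta> \<ge> 0\<close> by (simp add: integrated_problem_def add_pos_nonneg)
  moreover have "(d has_real_derivative z' e - y' e) (at e within {0..lam})"
    unfolding d_def using y z e_in by (intro DERIV_diff) (auto simp: integrated_problem_def)
  then have "z' e - y' e \<le> 0"
    by (rule derivative_nonpos_at_first_zero) (use e pos in auto)
  ultimately show False
    by (simp add: zero_less_mult_iff)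
qed

lemma integrated_problem_slope_diff_le:
  assumes "\<beta> \<ge> 0"
    and y: "integrated_problem lam \<beta> \<gamma> y y'" and z: "integrated_problem lam \<beta> \<gamma> z z'"
    and "y 0 = z 0" and s: "s \<in> {0..lam}"
  shows "\<bar>z' s - y' s\<bar> \<le> (2 * lam + \<beta> * \<bar>\<gamma> * y 0 - 2 * s * y s + 2 * integral {0..s} y\<bar>) * \<bar>z s - y s\<bar>
    + 2 * integral {0..s} (\<lambda>t. \<bar>z t - y t\<bar>)"
proof -
  define d where "d t = z t - y t" for t
  define N where "N = \<gamma> * y 0 - 2 * s * y s + 2 * integral {0..s} y"
  define A where "A = - 2 * s * d s + 2 * integral {0..s} d"
  have dc: "continuous_on {0..lam} d"
    unfolding d_def using integrated_problem_continuous[OF y] integrated_problem_continuous[OF z]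
    by (intro continuous_intros)
  have int: "f integrable_on {0..s}" if "continuous_on {0..lam} f" for f :: "real \<Rightarrow> real"
    using that s by (intro integrable_continuous_real) (auto elim: continuous_on_subset)
  have "integral {0..s} d = integral {0..s} z - integral {0..s} y"
    unfolding d_def using integrated_problem_continuous[OF y] integrated_problem_continuous[OF z]
    by (intro integral_diff int)
  then have zs: "(1 + \<beta> * z s) * z' s = N + A" and ys: "(1 + \<beta> * y s) * y' s = N"
    using y z s \<open>y 0 = z 0\<close> by (auto simp: integrated_problem_def N_def A_def d_def algebra_simps)
  have p: "1 \<le> 1 + \<beta> * z s" and q: "1 \<le> 1 + \<beta> * y s"
    using y z s \<open>\<beta> \<ge> 0\<close> by (auto simp: integrated_problem_def)
  have "z' s = (N + A) / (1 + \<beta> * z s)"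
    using p by (simp add: zs[symmetric])
  moreover have "y' s = N / (1 + \<beta> * y s)"
    using q by (simp add: ys[symmetric])
  moreover have "(1 + \<beta> * y s) - (1 + \<beta> * z s) = - (\<beta> * d s)"
    by (simp add: d_def algebra_simps)
  ultimately have "\<bar>z' s - y' s\<bar> \<le> \<bar>A\<bar> + \<bar>N\<bar> * (\<beta> * \<bar>d s\<bar>)"
    using abs_quotient_diff_le[OF p q, of N A] \<open>\<beta> \<ge> 0\<close> by (simp add: abs_mult)
  moreover have "\<bar>A\<bar> \<le> 2 * (s * \<bar>d s\<bar>) + 2 * \<bar>integral {0..s} d\<bar>"
    unfolding A_def using s abs_triangle_ineq[of "- 2 * s * d s" "2 * integral {0..s} d"]
    by (simp add: abs_mult)
  moreover have "\<bar>integral {0..s} d\<bar> \<le> integral {0..s} (\<lambda>t. \<bar>d t\<bar>)"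
  proof -
    have "continuous_on {0..lam} (\<lambda>t. \<bar>d t\<bar>)"
      using dc by (intro continuous_intros)
    then show ?thesis
      by (rule integral_norm_bound_integral[OF int[OF dc] int, unfolded real_norm_def]) simp
  qed
  moreover have "s * \<bar>d s\<bar> \<le> lam * \<bar>d s\<bar>"
    using s by (intro mult_right_mono) auto
  moreover have "(2 * lam + \<beta> * \<bar>N\<bar>) * \<bar>d s\<bar> = 2 * (lam * \<bar>d s\<bar>) + \<bar>N\<bar> * (\<beta> * \<bar>d s\<bar>)"
    by (simp add: algebra_simps)
  ultimately have "\<bar>z' s - y' s\<bar> \<le> (2 * lam + \<beta> * \<bar>N\<bar>) * \<bar>d s\<bar> + 2 * integral {0..s} (\<lambda>t. \<bar>d t\<bar>)"
    by linarith
  then show ?thesis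
    unfolding N_def d_def .
qed

lemma integrated_problem_slope_diff:
  assumes "\<beta> \<ge> 0" "0 \<le> lam"
    and y: "integrated_problem lam \<beta> \<gamma> y y'" and z: "integrated_problem lam \<beta> \<gamma> z z'"
    and "y 0 = z 0"
  obtains L where "L \<ge> 0" and "\<And>s. s \<in> {0..lam} \<Longrightarrow>
    \<bar>z' s - y' s\<bar> \<le> L * \<bar>z s - y s\<bar> + 2 * integral {0..s} (\<lambda>t. \<bar>z t - y t\<bar>)"
proof -
  define N where "N s = \<gamma> * y 0 - 2 * s * y s + 2 * integral {0..s} y" for s
  have yc: "continuous_on {0..lam} y"
    using integrated_problem_continuous[OF y] .
  then have "continuous_on {0..lam} N"
    unfolding N_def using DERIV_continuous_on[OF integral_has_real_derivative[OF yc]]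
    by (intro continuous_intros)
  then obtain B where "B > 0" and B: "\<And>s. s \<in> {0..lam} \<Longrightarrow> \<bar>N s\<bar> \<le> B"
    using compact_imp_bounded[OF compact_continuous_image[OF _ compact_Icc]]
    by (force simp: bounded_pos)
  show ?thesis
  proof (rule that[of "2 * lam + \<beta> * B"])
    show "0 \<le> 2 * lam + \<beta> * B"
      using assms(1,2) \<open>B > 0\<close> by simp
    fix s assume s: "s \<in> {0..lam}"
    have "\<beta> * \<bar>N s\<bar> \<le> \<beta> * B"
      by (rule mult_left_mono[OF B[OF s] \<open>\<beta> \<ge> 0\<close>])
    then have "(2 * lam + \<beta> * \<bar>N s\<bar>) * \<bar>z s - y s\<bar> \<le> (2 * lam + \<beta> * B) * \<bar>z s - y s\<bar>"
      by (intro mult_right_mono) simp_all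
    then show "\<bar>z' s - y' s\<bar> \<le> (2 * lam + \<beta> * B) * \<bar>z s - y s\<bar>
        + 2 * integral {0..s} (\<lambda>t. \<bar>z t - y t\<bar>)"
      using integrated_problem_slope_diff_le[OF assms(1) y z \<open>y 0 = z 0\<close> s]
      unfolding N_def by linarith
  qed
qed

lemma integrated_problem_unique:
  assumes "\<beta> \<ge> 0" "\<gamma> > 0" "0 \<le> lam"
    and y: "integrated_problem lam \<beta> \<gamma> y y'" and z: "integrated_problem lam \<beta> \<gamma> z z'"
    and "y lam = z lam" and \<eta>: "\<eta> \<in> {0..lam}"
  shows "z \<eta> = y \<eta>"
proof -
  have "y 0 = z 0"
    using integrated_problem_start_le[OF assms(1,2) y z] integrated_problem_start_le[OF assms(1,2) z y]
      assms(3,6) by force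
  then obtain L where "L \<ge> 0" and L: "\<And>s. s \<in> {0..lam} \<Longrightarrow>
      \<bar>z' s - y' s\<bar> \<le> L * \<bar>z s - y s\<bar> + 2 * integral {0..s} (\<lambda>t. \<bar>z t - y t\<bar>)"
    using integrated_problem_slope_diff[OF assms(1,3) y z] by blast
  have "(\<lambda>t. z t - y t) \<eta> = 0"
  proof (rule derivative_bound_gronwall_zero[OF _ _ \<open>L \<ge> 0\<close> _ L \<eta>])
    show "((\<lambda>t. z t - y t) has_real_derivative z' s - y' s) (at s within {0..lam})"
      if "s \<in> {0..lam}" for s
      using y z that by (intro DERIV_diff) (auto simp: integrated_problem_def)
  qed (use \<open>y 0 = z 0\<close> in auto)
  then show ?thesis by simp
qed

theorem solves_problem_unique:
  assumes "lam > 0" "\<beta> \<ge> 0" "\<gamma> > 0"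
    and "solves_problem lam \<beta> \<gamma> y" "\<forall>\<eta>\<in>{0..lam}. y \<eta> \<ge> 0"
    and "solves_problem lam \<beta> \<gamma> z" "\<forall>\<eta>\<in>{0..lam}. z \<eta> \<ge> 0"
    and "\<eta> \<in> {0..lam}"
  shows "z \<eta> = y \<eta>"
proof -
  obtain y' z' where "integrated_problem lam \<beta> \<gamma> y y'" "integrated_problem lam \<beta> \<gamma> z z'"
    using solves_problem_integrated assms by metis
  moreover have "y lam = 1" "z lam = 1"
    using assms(4,6) unfolding solves_problem_def by blast+
  ultimately show ?thesis
    using integrated_problem_unique assms(1-3,8) by (metis less_imp_le)
qed

section \<open>Existence\<close>

locale gme_params =
  fixes lam \<beta> \<gamma> :: real
  assumes lam_pos: "lam > 0" and beta_nonneg: "\<beta> \<ge> 0" and gamma_pos: "\<gamma> > 0"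
begin

text \<open>\<open>R\<close> bounds \<open>\<bar>z\<bar>\<close> on the rectangle \<open>\<Omega>\<close> and \<open>Emax\<close> bounds the flux factor there;
  the half-width \<open>\<delta>\<close> of \<open>\<Omega>\<close> is small enough that \<open>Re (1 + \<beta> v) \<ge> 1/2\<close> survives off the
  real axis, \<open>K\<close> is large enough that the Picard map halves the weighted distance, and
  \<open>Vmax\<close> bounds all iterates.\<close>

definition "R = lam + 2"
definition "Emax = exp (4 * R\<^sup>2)"
definition "\<delta> = 1 / (8 * (\<beta> + 1) * (\<gamma> + 1) * Emax)"
definition "\<Omega> = box (Complex (- \<delta>) (- \<delta>)) (Complex (lam + \<delta>) \<delta>)"
definition "K = 1 + 8 * \<gamma> * Emax * \<beta> * (4 * R + 1)"
definition "Vmax = 1 + 2 * \<gamma> * Emax * R"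

text \<open>For a candidate solution \<open>v\<close> continued to \<open>\<Omega>\<close>: \<open>inv_diff\<close> is the inverse diffusivity,
  \<open>flux v\<close> is the flux divided by \<open>\<gamma> a\<close>, \<open>slope v\<close> is \<open>y' / (\<gamma> a)\<close>, and \<open>picard a v\<close> is the
  right-hand side of the fixed point equation.\<close>

definition inv_diff :: "complex \<Rightarrow> complex" where
  "inv_diff w = 1 / (1 + of_real \<beta> * w)"
definition "flux_exponent v s = contour_integral (linepath 0 s) (\<lambda>t. t * inv_diff (v t))"
definition "flux v s = exp (- 2 * flux_exponent v s)"
definition "slope v s = flux v s * inv_diff (v s)"
definition "picard a v z = of_real a + of_real (\<gamma> * a) * contour_integral (linepath 0 z) (slope v)"

definition admissible :: "(complex \<Rightarrow> complex) \<Rightarrow> bool" where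
  "admissible v \<longleftrightarrow> v holomorphic_on \<Omega> \<and> (\<forall>z\<in>\<Omega>. 1/2 \<le> 1 + \<beta> * Re (v z))
     \<and> (\<forall>x\<in>{0..lam}. Im (v (of_real x)) = 0 \<and> 0 \<le> Re (v (of_real x)))
     \<and> (\<forall>z\<in>\<Omega>. norm (v z) \<le> Vmax)"

lemma R_ge_2: "R \<ge> 2"
  using lam_pos by (simp add: R_def)

lemma Emax_ge_1: "Emax \<ge> 1"
  by (simp add: Emax_def)

lemma delta_pos: "\<delta> > 0"
  using beta_nonneg gamma_pos Emax_ge_1 by (simp add: \<delta>_def)

lemma delta_le_1: "\<delta> \<le> 1"
proof -
  have "1 \<le> (\<beta> + 1) * (\<gamma> + 1)"
    using mult_mono[of 1 "\<beta> + 1" 1 "\<gamma> + 1"] beta_nonneg gamma_pos by simp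
  then have "1 \<le> (\<beta> + 1) * (\<gamma> + 1) * Emax"
    using mult_mono[OF _ Emax_ge_1] by fastforce
  then have "1 \<le> 8 * (\<beta> + 1) * (\<gamma> + 1) * Emax"
    by linarith
  then show ?thesis
    by (simp add: \<delta>_def)
qed

lemma K_ge_1: "K \<ge> 1"
  using beta_nonneg gamma_pos Emax_ge_1 R_ge_2 by (simp add: K_def)

lemma Vmax_ge_1: "Vmax \<ge> 1"
  using gamma_pos Emax_ge_1 R_ge_2 by (simp add: Vmax_def)

lemma open_\<Omega>: "open \<Omega>"
  by (simp only: \<Omega>_def open_box)

lemma convex_\<Omega>: "convex \<Omega>"
  by (simp only: \<Omega>_def convex_box)

lemma mem_\<Omega>: "z \<in> \<Omega> \<longleftrightarrow> - \<delta> < Re z \<and> Re z < lam + \<delta> \<and> - \<delta> < Im z \<and> Im z < \<delta>"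
  by (simp add: \<Omega>_def in_box_complex_iff)

lemma of_real_in_\<Omega>: "x \<in> {0..lam} \<Longrightarrow> of_real x \<in> \<Omega>"
  using delta_pos by (auto simp: mem_\<Omega>)

lemma zero_in_\<Omega>: "0 \<in> \<Omega>"
  using of_real_in_\<Omega>[of 0] lam_pos by simp

lemma norm_le_R: "z \<in> \<Omega> \<Longrightarrow> norm z \<le> R"
  using cmod_le[of z] delta_le_1 delta_pos lam_pos by (auto simp: mem_\<Omega> R_def)

lemma segment_subset_\<Omega>: "z \<in> \<Omega> \<Longrightarrow> closed_segment 0 z \<subseteq> \<Omega>"
  using convex_\<Omega> zero_in_\<Omega> by (simp add: closed_segment_subset)

lemma continuous_on_segment: "f holomorphic_on \<Omega> \<Longrightarrow> z \<in> \<Omega> \<Longrightarrow> continuous_on (closed_segment 0 z) f"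
  using holomorphic_on_imp_continuous_on continuous_on_subset segment_subset_\<Omega> by blast

lemma contour_integrable_segment:
  "f holomorphic_on \<Omega> \<Longrightarrow> z \<in> \<Omega> \<Longrightarrow> f contour_integrable_on linepath 0 z"
  by (rule contour_integrable_continuous_linepath[OF continuous_on_segment])

lemma norm_diffusivity_ge:
  "1/2 \<le> 1 + \<beta> * Re w \<Longrightarrow> 1/2 \<le> norm (1 + of_real \<beta> * w)"
  using complex_Re_le_cmod[of "1 + of_real \<beta> * w"] by simp

lemma diffusivity_nonzero: "1/2 \<le> 1 + \<beta> * Re w \<Longrightarrow> 1 + of_real \<beta> * w \<noteq> 0"
  using norm_diffusivity_ge[of w] by auto

lemma norm_inv_diff_le: "1/2 \<le> 1 + \<beta> * Re w \<Longrightarrow> norm (inv_diff w) \<le> 2"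
  using norm_diffusivity_ge[of w] by (simp add: inv_diff_def norm_divide divide_le_eq)

lemma inv_diff_lipschitz:
  assumes "1/2 \<le> 1 + \<beta> * Re w1" "1/2 \<le> 1 + \<beta> * Re w2"
  shows "norm (inv_diff w1 - inv_diff w2) \<le> 4 * \<beta> * norm (w1 - w2)"
proof -
  have "inv_diff w1 - inv_diff w2 = of_real \<beta> * (w2 - w1) * (inv_diff w1 * inv_diff w2)"
    using diffusivity_nonzero[OF assms(1)] diffusivity_nonzero[OF assms(2)]
    by (simp add: inv_diff_def field_simps)
  then have "norm (inv_diff w1 - inv_diff w2)
      = \<beta> * norm (w1 - w2) * (norm (inv_diff w1) * norm (inv_diff w2))"
    using beta_nonneg by (simp add: norm_mult norm_minus_commute)
  also have "\<dots> \<le> \<beta> * norm (w1 - w2) * (2 * 2)"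
    using norm_inv_diff_le[OF assms(1)] norm_inv_diff_le[OF assms(2)] beta_nonneg
    by (intro mult_left_mono mult_mono) auto
  finally show ?thesis by simp
qed

lemma admissible_holomorphic: "admissible v \<Longrightarrow> v holomorphic_on \<Omega>"
  and admissible_Re_ge: "admissible v \<Longrightarrow> z \<in> \<Omega> \<Longrightarrow> 1/2 \<le> 1 + \<beta> * Re (v z)"
  and admissible_real: "admissible v \<Longrightarrow> x \<in> {0..lam} \<Longrightarrow>
    Im (v (of_real x)) = 0 \<and> 0 \<le> Re (v (of_real x))"
  and admissible_norm_le: "admissible v \<Longrightarrow> z \<in> \<Omega> \<Longrightarrow> norm (v z) \<le> Vmax"
  by (simp_all add: admissible_def)

lemma admissible_const: "0 \<le> a \<Longrightarrow> a \<le> 1 \<Longrightarrow> admissible (\<lambda>z. of_real a)"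
  unfolding admissible_def using beta_nonneg Vmax_ge_1 by auto

lemma holomorphic_inv_diff: "admissible v \<Longrightarrow> (\<lambda>t. inv_diff (v t)) holomorphic_on \<Omega>"
  unfolding inv_diff_def
  by (intro holomorphic_intros admissible_holomorphic) (auto dest: admissible_Re_ge diffusivity_nonzero)

lemma has_field_derivative_flux_exponent:
  "admissible v \<Longrightarrow> s \<in> \<Omega> \<Longrightarrow> (flux_exponent v has_field_derivative s * inv_diff (v s)) (at s)"
  unfolding flux_exponent_def[abs_def]
  by (intro has_field_derivative_linepath_integral[OF convex_\<Omega> open_\<Omega> zero_in_\<Omega>]
      holomorphic_intros holomorphic_inv_diff)

lemma has_field_derivative_flux:
  assumes "admissible v" "s \<in> \<Omega>"
  shows "(flux v has_field_derivative flux v s * (- 2 * (s * inv_diff (v s)))) (at s)"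
  unfolding flux_def[abs_def]
  by (intro DERIV_chain2[OF DERIV_exp] DERIV_cmult has_field_derivative_flux_exponent assms)

lemma holomorphic_flux: "admissible v \<Longrightarrow> flux v holomorphic_on \<Omega>"
  using has_field_derivative_flux open_\<Omega> by (auto simp: holomorphic_on_open)

lemma holomorphic_slope: "admissible v \<Longrightarrow> slope v holomorphic_on \<Omega>"
  unfolding slope_def[abs_def] by (intro holomorphic_intros holomorphic_flux holomorphic_inv_diff)

lemma has_field_derivative_picard:
  "admissible v \<Longrightarrow> z \<in> \<Omega> \<Longrightarrow> (picard a v has_field_derivative of_real (\<gamma> * a) * slope v z) (at z)"
  unfolding picard_def[abs_def]
  by (rule derivative_eq_intros has_field_derivative_linepath_integral[OF convex_\<Omega> open_\<Omega>
        zero_in_\<Omega> holomorphic_slope] | assumption | simp)+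

lemma picard_at_0: "picard a v 0 = of_real a"
  by (simp add: picard_def)

lemma holomorphic_picard: "admissible v \<Longrightarrow> picard a v holomorphic_on \<Omega>"
  using has_field_derivative_picard open_\<Omega> by (auto simp: holomorphic_on_open)

lemma Re_flux_exponent_le: "admissible v \<Longrightarrow> s \<in> \<Omega> \<Longrightarrow> Re (- 2 * flux_exponent v s) \<le> 4 * R\<^sup>2"
proof -
  assume v: "admissible v" and s: "s \<in> \<Omega>"
  have "norm (flux_exponent v s) \<le> (R * 2) * norm (s - 0)"
    unfolding flux_exponent_def
  proof (rule contour_integral_bound_linepath)
    show "(\<lambda>t. t * inv_diff (v t)) contour_integrable_on linepath 0 s"
      by (intro contour_integrable_segment holomorphic_intros holomorphic_inv_diff v s)
    show "norm (t * inv_diff (v t)) \<le> R * 2" if "t \<in> closed_segment 0 s" for t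
    proof -
      have t: "t \<in> \<Omega>" using that segment_subset_\<Omega>[OF s] by auto
      show ?thesis
        unfolding norm_mult using norm_le_R[OF t] norm_inv_diff_le[OF admissible_Re_ge[OF v t]] R_ge_2
        by (intro mult_mono) auto
    qed
  qed (use R_ge_2 in simp)
  also have "\<dots> \<le> (R * 2) * R"
    using norm_le_R[OF s] R_ge_2 by simp
  finally show ?thesis
    using complex_Re_le_cmod[of "- 2 * flux_exponent v s"] by (simp add: norm_mult power2_eq_square)
qed

lemma norm_flux_le: "admissible v \<Longrightarrow> s \<in> \<Omega> \<Longrightarrow> norm (flux v s) \<le> Emax"
  unfolding flux_def Emax_def norm_exp_eq_Re using Re_flux_exponent_le by simp

lemma norm_slope_le:
  assumes "admissible v" "s \<in> \<Omega>"
  shows "norm (slope v s) \<le> 2 * Emax"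
proof -
  have "norm (slope v s) \<le> Emax * 2"
    unfolding slope_def norm_mult
    using norm_flux_le[OF assms] norm_inv_diff_le[OF admissible_Re_ge[OF assms]] Emax_ge_1
    by (intro mult_mono) auto
  then show ?thesis by simp
qed

lemma norm_integral_slope_le:
  assumes "admissible v" "z \<in> \<Omega>"
  shows "norm (contour_integral (linepath 0 z) (slope v)) \<le> 2 * Emax * R"
proof -
  have "norm (contour_integral (linepath 0 z) (slope v)) \<le> (2 * Emax) * norm (z - 0)"
    using norm_slope_le[OF assms(1)] segment_subset_\<Omega>[OF assms(2)] Emax_ge_1
    by (intro contour_integral_bound_linepath contour_integrable_segment holomorphic_slope assms) auto
  also have "\<dots> \<le> 2 * Emax * R"
    using norm_le_R[OF assms(2)] Emax_ge_1 by simp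
  finally show ?thesis .
qed

lemma admissible_real_value:
  assumes "admissible v" "x \<in> {0..lam}"
  shows "v (of_real x) = of_real (Re (v (of_real x)))"
  using admissible_real[OF assms] by (simp add: complex_eq_iff)

lemma inv_diff_of_real: "inv_diff (of_real r) = of_real (1 / (1 + \<beta> * r))"
  by (simp add: inv_diff_def)

lemma inv_diff_real_pos:
  assumes "admissible v" "x \<in> {0..lam}"
  obtains r where "inv_diff (v (of_real x)) = of_real r" "r > 0"
proof -
  have "0 \<le> Re (v (of_real x))"
    using admissible_real[OF assms] by simp
  then have "1 / (1 + \<beta> * Re (v (of_real x))) > 0"
    using beta_nonneg by (simp add: add_pos_nonneg)
  then show ?thesis
    using that inv_diff_of_real admissible_real_value[OF assms] by metis
qed

lemma flux_real_pos:
  assumes "admissible v" "x \<in> {0..lam}"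
  obtains e where "flux v (of_real x) = of_real e" "e > 0"
proof -
  have "Im (contour_integral (linepath 0 (of_real x)) (\<lambda>t. t * inv_diff (v t))) = 0"
  proof (rule conjunct1[OF linepath_integral_real_nonneg])
    show "continuous_on (closed_segment 0 (of_real x)) (\<lambda>t. t * inv_diff (v t))"
      by (intro continuous_on_segment of_real_in_\<Omega> assms holomorphic_intros holomorphic_inv_diff)
    fix t assume t: "0 \<le> t" "t \<le> x"
    then obtain r where "inv_diff (v (of_real t)) = of_real r" "r > 0"
      using inv_diff_real_pos[OF assms(1), of t] assms(2) by auto
    then show "Im (of_real t * inv_diff (v (of_real t))) = 0
        \<and> 0 \<le> Re (of_real t * inv_diff (v (of_real t)))"
      using t by simp
  qed (use assms in simp)
  then have "flux_exponent v (of_real x) = of_real (Re (flux_exponent v (of_real x)))"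
    by (simp add: flux_exponent_def complex_eq_iff)
  then have "flux v (of_real x) = exp (of_real (- 2 * Re (flux_exponent v (of_real x))))"
    unfolding flux_def by (subst (1) \<open>flux_exponent v _ = _\<close>) simp
  then show ?thesis
    using that[of "exp (- 2 * Re (flux_exponent v (of_real x)))"] by (simp only: exp_of_real) simp
qed

lemma diffusivity_mult_Re_slope:
  assumes "admissible v" "t \<in> {0..lam}"
  shows "(1 + \<beta> * Re (v (of_real t))) * Re (slope v (of_real t)) = Re (flux v (of_real t))"
proof -
  obtain e where e: "flux v (of_real t) = of_real e"
    using flux_real_pos[OF assms] by blast
  have "0 \<le> Re (v (of_real t))"
    using admissible_real[OF assms] by simp
  then have "1 + \<beta> * Re (v (of_real t)) > 0"
    using beta_nonneg by (simp add: add_pos_nonneg)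
  moreover have "inv_diff (v (of_real t)) = of_real (1 / (1 + \<beta> * Re (v (of_real t))))"
    using admissible_real_value[OF assms] inv_diff_of_real by metis
  ultimately show ?thesis
    by (simp add: slope_def e)
qed

lemma has_real_derivative_Re_flux:
  assumes "admissible v" "\<eta> \<in> {0..lam}"
  shows "((\<lambda>t. Re (flux v (of_real t))) has_real_derivative - 2 * \<eta> * Re (slope v (of_real \<eta>))) (at \<eta>)"
proof -
  have "flux v (of_real \<eta>) * (- 2 * (of_real \<eta> * inv_diff (v (of_real \<eta>))))
      = of_real (- 2 * \<eta>) * slope v (of_real \<eta>)"
    by (simp add: slope_def algebra_simps)
  then have "((\<lambda>t. Re (flux v (of_real t))) has_real_derivative
      Re (of_real (- 2 * \<eta>) * slope v (of_real \<eta>))) (at \<eta>)"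
    using has_real_derivative_Re_of_real[OF has_field_derivative_flux[OF assms(1) of_real_in_\<Omega>[OF assms(2)]]]
    by metis
  then show ?thesis
    by simp
qed

lemma picard_real_ge:
  assumes "admissible v" "0 \<le> a" "x \<in> {0..lam}"
  shows "Im (picard a v (of_real x)) = 0 \<and> a \<le> Re (picard a v (of_real x))"
proof -
  have "Im (contour_integral (linepath 0 (of_real x)) (slope v)) = 0 \<and>
        0 \<le> Re (contour_integral (linepath 0 (of_real x)) (slope v))"
  proof (rule linepath_integral_real_nonneg)
    show "continuous_on (closed_segment 0 (of_real x)) (slope v)"
      by (intro continuous_on_segment holomorphic_slope of_real_in_\<Omega> assms)
    fix t assume "0 \<le> t" "t \<le> x"
    then have t: "t \<in> {0..lam}" using assms(3) by auto
    obtain e where "flux v (of_real t) = of_real e" "e > 0"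
      using flux_real_pos[OF assms(1) t] .
    moreover obtain r where "inv_diff (v (of_real t)) = of_real r" "r > 0"
      using inv_diff_real_pos[OF assms(1) t] .
    ultimately show "Im (slope v (of_real t)) = 0 \<and> 0 \<le> Re (slope v (of_real t))"
      by (simp add: slope_def)
  qed (use assms in simp)
  then show ?thesis
    using assms gamma_pos by (simp add: picard_def)
qed

lemma norm_picard_le:
  assumes "admissible v" "0 \<le> a" "a \<le> 1" "z \<in> \<Omega>"
  shows "norm (picard a v z) \<le> Vmax"
proof -
  have "norm (picard a v z) \<le> norm (of_real a :: complex)
      + norm (of_real (\<gamma> * a) * contour_integral (linepath 0 z) (slope v))"
    unfolding picard_def by (rule norm_triangle_ineq)
  also have "\<dots> = a + \<gamma> * a * norm (contour_integral (linepath 0 z) (slope v))"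
    using assms gamma_pos by (simp add: norm_mult)
  also have "\<dots> \<le> 1 + \<gamma> * 1 * (2 * Emax * R)"
    using assms gamma_pos norm_integral_slope_le[OF assms(1,4)]
    by (intro add_mono mult_mono) auto
  finally show ?thesis by (simp add: Vmax_def)
qed

lemma delta_small: "\<beta> * (4 * \<gamma> * Emax * \<delta>) \<le> 1/2"
proof -
  have "\<beta> * (4 * \<gamma> * Emax * \<delta>) = (\<beta> * \<gamma>) * (4 * Emax * \<delta>)"
    by (simp add: algebra_simps)
  also have "\<dots> \<le> ((\<beta> + 1) * (\<gamma> + 1)) * (4 * Emax * \<delta>)"
    using beta_nonneg gamma_pos Emax_ge_1 delta_pos by (intro mult_right_mono mult_mono) auto
  also have "\<dots> = 1/2"
    using beta_nonneg gamma_pos Emax_ge_1 by (simp add: \<delta>_def)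
  finally show ?thesis .
qed

lemma picard_Re_ge:
  assumes "admissible v" "0 \<le> a" "a \<le> 1" "z \<in> \<Omega>"
  shows "1/2 \<le> 1 + \<beta> * Re (picard a v z)"
proof -
  define x where "x = max 0 (min lam (Re z))"
  have x: "x \<in> {0..lam}" using lam_pos by (auto simp: x_def)
  have "norm (z - of_real x) \<le> \<bar>Re (z - of_real x)\<bar> + \<bar>Im (z - of_real x)\<bar>"
    by (rule cmod_le)
  also have "\<dots> \<le> 2 * \<delta>"
    using assms(4) lam_pos by (auto simp: mem_\<Omega> x_def)
  finally have dist: "norm (z - of_real x) \<le> 2 * \<delta>" .
  have "norm (picard a v z - picard a v (of_real x)) \<le> (\<gamma> * (2 * Emax)) * norm (z - of_real x)"
  proof (rule field_differentiable_bound[OF convex_\<Omega>])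
    fix w assume w: "w \<in> \<Omega>"
    show "(picard a v has_field_derivative of_real (\<gamma> * a) * slope v w) (at w within \<Omega>)"
      using has_field_derivative_picard[OF assms(1) w] by (rule DERIV_subset) simp
    have "norm (of_real (\<gamma> * a) * slope v w) = (\<gamma> * a) * norm (slope v w)"
      using assms gamma_pos by (simp add: norm_mult)
    also have "\<dots> \<le> \<gamma> * (2 * Emax)"
      using assms gamma_pos norm_slope_le[OF assms(1) w]
      by (intro mult_mono) (auto simp: mult_left_le)
    finally show "norm (of_real (\<gamma> * a) * slope v w) \<le> \<gamma> * (2 * Emax)" .
  qed (use assms(4) of_real_in_\<Omega>[OF x] in auto)
  also have "\<dots> \<le> (\<gamma> * (2 * Emax)) * (2 * \<delta>)"
    using dist gamma_pos Emax_ge_1 by (intro mult_left_mono) auto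
  also have "\<dots> = 4 * \<gamma> * Emax * \<delta>"
    by simp
  finally have "norm (picard a v z - picard a v (of_real x)) \<le> 4 * \<gamma> * Emax * \<delta>" .
  moreover have "Re (picard a v (of_real x)) - Re (picard a v z)
      \<le> norm (picard a v z - picard a v (of_real x))"
    by (metis complex_Re_le_cmod minus_complex.sel(1) norm_minus_commute)
  moreover have "0 \<le> Re (picard a v (of_real x))"
    using picard_real_ge[OF assms(1,2) x] assms(2) by linarith
  ultimately have "- (4 * \<gamma> * Emax * \<delta>) \<le> Re (picard a v z)"
    by linarith
  then have "\<beta> * - (4 * \<gamma> * Emax * \<delta>) \<le> \<beta> * Re (picard a v z)"
    using beta_nonneg by (rule mult_left_mono)
  then show ?thesis
    using delta_small by simp
qed

lemma admissible_picard:
  assumes "admissible v" "0 \<le> a" "a \<le> 1"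
  shows "admissible (picard a v)"
  unfolding admissible_def
  using picard_real_ge[OF assms(1,2)] assms(2)
  by (intro conjI ballI holomorphic_picard[OF assms(1)] picard_Re_ge[OF assms]
      norm_picard_le[OF assms]) force+

definition weighted_le :: "real \<Rightarrow> (complex \<Rightarrow> complex) \<Rightarrow> (complex \<Rightarrow> complex) \<Rightarrow> bool" where
  "weighted_le D v w \<longleftrightarrow> (\<forall>z\<in>\<Omega>. norm (v z - w z) \<le> D * exp (K * norm z))"

lemma weighted_le_mono: "weighted_le D v w \<Longrightarrow> D \<le> D' \<Longrightarrow> weighted_le D' v w"
  unfolding weighted_le_def by (meson mult_right_mono exp_ge_zero order_trans)

lemma weighted_le_sym: "weighted_le D v w \<Longrightarrow> weighted_le D w v"
  by (simp add: weighted_le_def norm_minus_commute)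

lemma weighted_le_triangle: "weighted_le D1 u v \<Longrightarrow> weighted_le D2 v w \<Longrightarrow> weighted_le (D1 + D2) u w"
  unfolding weighted_le_def distrib_right using norm_diff_triangle_le by blast

lemma K_pos: "K > 0"
  using K_ge_1 by simp

lemma one_le_exp_weight: "1 \<le> exp (K * norm z)"
  using K_pos by simp

lemma contraction_factor_le:
  assumes "D \<ge> 0"
  shows "\<gamma> * (Emax * \<beta> * D * (16 * R / K + 4)) / K \<le> D / 2"
proof -
  define X where "X = \<gamma> * Emax * \<beta>"
  have X: "X \<ge> 0" using gamma_pos Emax_ge_1 beta_nonneg by (simp add: X_def)
  have "16 * R / K \<le> 16 * R"
    using K_ge_1 R_ge_2 by (simp add: divide_le_eq mult_le_cancel_left1)
  have "\<gamma> * (Emax * \<beta> * D * (16 * R / K + 4)) / K = (X * D) * (16 * R / K + 4) / K"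
    by (simp add: X_def algebra_simps)
  also have "\<dots> \<le> (X * D) * (16 * R + 4) / K"
    using \<open>16 * R / K \<le> 16 * R\<close> X assms K_pos by (intro divide_right_mono mult_left_mono) auto
  also have "\<dots> = D * (X * (16 * R + 4) / K)"
    by simp
  also have "\<dots> \<le> D * (1/2)"
  proof (rule mult_left_mono[OF _ assms])
    have "X * (16 * R + 4) * 2 \<le> K"
      by (simp add: K_def X_def algebra_simps)
    then show "X * (16 * R + 4) / K \<le> 1/2"
      using K_pos by (simp add: divide_le_eq)
  qed
  finally show ?thesis by simp
qed

text \<open>Integration along a segment gains a factor \<open>1 / K\<close> against the weight \<open>exp (K \<bar>t\<bar>)\<close>
  (lemma \<open>norm_linepath_integral_le_exp\<close>); this is what makes the Picard map a contraction.\<close>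

context
  fixes v w :: "complex \<Rightarrow> complex" and D :: real
  assumes v: "admissible v" and w: "admissible w" and "D \<ge> 0" and close: "weighted_le D v w"
begin

lemma inv_diff_weighted:
  assumes "t \<in> \<Omega>"
  shows "norm (inv_diff (v t) - inv_diff (w t)) \<le> (4 * \<beta> * D) * exp (K * norm t)"
proof -
  have "norm (inv_diff (v t) - inv_diff (w t)) \<le> 4 * \<beta> * norm (v t - w t)"
    using inv_diff_lipschitz admissible_Re_ge v w assms by blast
  also have "\<dots> \<le> 4 * \<beta> * (D * exp (K * norm t))"
    using close assms beta_nonneg by (intro mult_left_mono) (auto simp: weighted_le_def)
  finally show ?thesis by simp
qed

lemma flux_exponent_weighted:
  assumes "s \<in> \<Omega>"
  shows "norm (flux_exponent v s - flux_exponent w s) \<le> (4 * \<beta> * D * R) * exp (K * norm s) / K"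
proof -
  have "flux_exponent v s - flux_exponent w s
      = contour_integral (linepath 0 s) (\<lambda>t. t * inv_diff (v t) - t * inv_diff (w t))"
    unfolding flux_exponent_def using assms v w
    by (intro contour_integral_diff[symmetric] contour_integrable_segment holomorphic_intros
        holomorphic_inv_diff)
  also have "norm \<dots> \<le> (4 * \<beta> * D * R) * exp (K * norm s) / K"
  proof (rule norm_linepath_integral_le_exp[OF _ _ K_pos])
    show "continuous_on (closed_segment 0 s) (\<lambda>t. t * inv_diff (v t) - t * inv_diff (w t))"
      using assms v w by (intro continuous_on_segment holomorphic_intros holomorphic_inv_diff)
    fix t assume "t \<in> closed_segment 0 s"
    then have t: "t \<in> \<Omega>" using segment_subset_\<Omega>[OF assms] by auto
    have "norm (t * inv_diff (v t) - t * inv_diff (w t)) = norm t * norm (inv_diff (v t) - inv_diff (w t))"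
      by (simp only: right_diff_distrib[symmetric] norm_mult)
    also have "\<dots> \<le> R * ((4 * \<beta> * D) * exp (K * norm t))"
      using norm_le_R[OF t] inv_diff_weighted[OF t] R_ge_2 by (intro mult_mono) auto
    finally show "norm (t * inv_diff (v t) - t * inv_diff (w t)) \<le> 4 * \<beta> * D * R * exp (K * norm t)"
      by (simp add: algebra_simps)
  qed (use beta_nonneg \<open>D \<ge> 0\<close> R_ge_2 in simp)
  finally show ?thesis .
qed

lemma flux_weighted:
  assumes "s \<in> \<Omega>"
  shows "norm (flux v s - flux w s) \<le> (8 * Emax * \<beta> * D * R) * exp (K * norm s) / K"
proof -
  have "norm (flux v s - flux w s) \<le> Emax * norm (- 2 * flux_exponent v s - (- 2 * flux_exponent w s))"
    unfolding flux_def Emax_def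
    by (rule norm_exp_diff_le[OF Re_flux_exponent_le[OF v assms] Re_flux_exponent_le[OF w assms]])
  also have "\<dots> = Emax * (2 * norm (flux_exponent v s - flux_exponent w s))"
  proof -
    have "- 2 * flux_exponent v s - (- 2 * flux_exponent w s)
        = (- 2) * (flux_exponent v s - flux_exponent w s)"
      by (simp add: algebra_simps)
    then show ?thesis by (simp only: norm_mult) simp
  qed
  also have "\<dots> \<le> Emax * (2 * ((4 * \<beta> * D * R) * exp (K * norm s) / K))"
    using flux_exponent_weighted[OF assms] Emax_ge_1 by (intro mult_left_mono) auto
  finally show ?thesis by (simp add: algebra_simps)
qed

lemma slope_weighted:
  assumes "s \<in> \<Omega>"
  shows "norm (slope v s - slope w s) \<le> (Emax * \<beta> * D * (16 * R / K + 4)) * exp (K * norm s)"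
proof -
  have "slope v s - slope w s = (flux v s - flux w s) * inv_diff (v s) + flux w s * (inv_diff (v s) - inv_diff (w s))"
    by (simp add: slope_def algebra_simps)
  then have "norm (slope v s - slope w s)
      \<le> norm (flux v s - flux w s) * norm (inv_diff (v s)) + norm (flux w s) * norm (inv_diff (v s) - inv_diff (w s))"
    using norm_triangle_ineq norm_mult by metis
  also have "\<dots> \<le> ((8 * Emax * \<beta> * D * R) * exp (K * norm s) / K) * 2 + Emax * ((4 * \<beta> * D) * exp (K * norm s))"
    using Emax_ge_1 beta_nonneg \<open>D \<ge> 0\<close> R_ge_2 K_pos
    by (intro add_mono mult_mono flux_weighted assms norm_inv_diff_le[OF admissible_Re_ge[OF v assms]]
        norm_flux_le[OF w assms] inv_diff_weighted) auto
  also have "\<dots> = (Emax * \<beta> * D * (16 * R / K + 4)) * exp (K * norm s)"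
    by (simp add: field_simps)
  finally show ?thesis .
qed

lemma picard_contraction:
  assumes "0 \<le> a" "a \<le> 1"
  shows "weighted_le (D / 2) (picard a v) (picard a w)"
  unfolding weighted_le_def
proof
  fix z assume z: "z \<in> \<Omega>"
  have "slope v contour_integrable_on linepath 0 z" "slope w contour_integrable_on linepath 0 z"
    using v w z by (simp_all add: contour_integrable_segment holomorphic_slope)
  then have "picard a v z - picard a w z
      = of_real (\<gamma> * a) * contour_integral (linepath 0 z) (\<lambda>s. slope v s - slope w s)"
    unfolding picard_def by (simp add: contour_integral_diff algebra_simps)
  then have "norm (picard a v z - picard a w z)
      = (\<gamma> * a) * norm (contour_integral (linepath 0 z) (\<lambda>s. slope v s - slope w s))"
    using assms gamma_pos by (simp add: norm_mult)
  also have "\<dots> \<le> \<gamma> * ((Emax * \<beta> * D * (16 * R / K + 4)) * exp (K * norm z) / K)"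
  proof (rule mult_mono)
    show "norm (contour_integral (linepath 0 z) (\<lambda>s. slope v s - slope w s))
        \<le> (Emax * \<beta> * D * (16 * R / K + 4)) * exp (K * norm z) / K"
    proof (rule norm_linepath_integral_le_exp[OF _ _ K_pos])
      show "continuous_on (closed_segment 0 z) (\<lambda>s. slope v s - slope w s)"
        using z v w by (intro continuous_on_segment holomorphic_intros holomorphic_slope)
      show "norm (slope v s - slope w s) \<le> Emax * \<beta> * D * (16 * R / K + 4) * exp (K * norm s)"
        if "s \<in> closed_segment 0 z" for s
        using that segment_subset_\<Omega>[OF z] slope_weighted by blast
    qed (use Emax_ge_1 beta_nonneg \<open>D \<ge> 0\<close> R_ge_2 K_pos in simp)
  qed (use assms gamma_pos in \<open>auto simp: mult_left_le\<close>)
  also have "\<dots> = (\<gamma> * (Emax * \<beta> * D * (16 * R / K + 4)) / K) * exp (K * norm z)"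
    by simp
  also have "\<dots> \<le> D / 2 * exp (K * norm z)"
    by (rule mult_right_mono[OF contraction_factor_le[OF \<open>D \<ge> 0\<close>]]) simp
  finally show "norm (picard a v z - picard a w z) \<le> D / 2 * exp (K * norm z)" .
qed

end

lemma picard_param_weighted:
  assumes "admissible v"
  shows "weighted_le (\<bar>a - b\<bar> * Vmax) (picard a v) (picard b v)"
  unfolding weighted_le_def
proof
  fix z assume z: "z \<in> \<Omega>"
  let ?I = "contour_integral (linepath 0 z) (slope v)"
  have "picard a v z - picard b v z = of_real (a - b) * (1 + of_real \<gamma> * ?I)"
    by (simp add: picard_def algebra_simps)
  then have "norm (picard a v z - picard b v z) = \<bar>a - b\<bar> * norm (1 + of_real \<gamma> * ?I)"
    by (simp only: norm_mult norm_of_real)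
  also have "\<dots> \<le> \<bar>a - b\<bar> * Vmax"
  proof (rule mult_left_mono)
    have "norm (1 + of_real \<gamma> * ?I) \<le> 1 + \<gamma> * norm ?I"
      using norm_triangle_ineq[of 1 "of_real \<gamma> * ?I"] gamma_pos by (simp add: norm_mult)
    also have "\<dots> \<le> 1 + \<gamma> * (2 * Emax * R)"
      using norm_integral_slope_le[OF assms z] gamma_pos by simp
    finally show "norm (1 + of_real \<gamma> * ?I) \<le> Vmax"
      by (simp add: Vmax_def algebra_simps)
  qed simp
  also have "\<dots> \<le> \<bar>a - b\<bar> * Vmax * exp (K * norm z)"
    using mult_left_mono[OF one_le_exp_weight, of "\<bar>a - b\<bar> * Vmax" z] Vmax_ge_1 by simp
  finally show "norm (picard a v z - picard b v z) \<le> \<bar>a - b\<bar> * Vmax * exp (K * norm z)" .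
qed

definition "picard_iter a n = (picard a ^^ n) (\<lambda>z. of_real a)"

definition "picard_fixed a v \<longleftrightarrow> admissible v \<and> (\<forall>z\<in>\<Omega>. picard a v z = v z)"

lemma picard_iter_0: "picard_iter a 0 = (\<lambda>z. of_real a)"
  and picard_iter_Suc: "picard_iter a (Suc n) = picard a (picard_iter a n)"
  by (simp_all add: picard_iter_def)

lemma admissible_picard_iter: "0 \<le> a \<Longrightarrow> a \<le> 1 \<Longrightarrow> admissible (picard_iter a n)"
  by (induction n) (simp_all add: picard_iter_0 picard_iter_Suc admissible_const admissible_picard)

lemma weighted_le_admissible:
  assumes "admissible v" "admissible w"
  shows "weighted_le (2 * Vmax) v w"
  unfolding weighted_le_def
proof
  fix z assume "z \<in> \<Omega>"
  then have "norm (v z - w z) \<le> Vmax + Vmax"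
    using order_trans[OF norm_triangle_ineq4 add_mono] admissible_norm_le assms by blast
  also have "\<dots> \<le> 2 * Vmax * exp (K * norm z)"
    using one_le_exp_weight[of z] Vmax_ge_1 by simp
  finally show "norm (v z - w z) \<le> 2 * Vmax * exp (K * norm z)" .
qed

lemma picard_iter_increment:
  assumes "0 \<le> a" "a \<le> 1"
  shows "weighted_le (2 * Vmax * (1/2) ^ n) (picard_iter a (Suc n)) (picard_iter a n)"
proof (induction n)
  case 0
  show ?case
    using weighted_le_admissible admissible_picard_iter assms by simp
next
  case (Suc n)
  have "weighted_le (2 * Vmax * (1/2) ^ n / 2)
      (picard a (picard_iter a (Suc n))) (picard a (picard_iter a n))"
    using Vmax_ge_1
    by (intro picard_contraction[OF admissible_picard_iter[OF assms] admissible_picard_iter[OF assms]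
          _ Suc.IH assms]) simp
  then show ?case by (simp add: picard_iter_Suc)
qed

lemma picard_iter_limit:
  assumes "0 \<le> a" "a \<le> 1"
  obtains v where "uniform_limit \<Omega> (picard_iter a) v sequentially"
    and "\<And>n. weighted_le (4 * Vmax * (1/2) ^ n) v (picard_iter a n)"
proof -
  define v where "v z = lim (\<lambda>n. picard_iter a n z)" for z
  have err: "norm (v z - picard_iter a n z) \<le> 4 * Vmax * (1/2) ^ n * exp (K * norm z)"
    if "z \<in> \<Omega>" for z n
  proof -
    have "norm (picard_iter a (Suc n) z - picard_iter a n z) \<le> (2 * Vmax * exp (K * norm z)) * (1/2) ^ n"
      for n using picard_iter_increment[OF assms, of n] that by (simp add: weighted_le_def mult_ac)
    then obtain l where "(\<lambda>n. picard_iter a n z) \<longlonglongrightarrow> l"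
      and "\<And>n. norm (l - picard_iter a n z) \<le> (2 * Vmax * exp (K * norm z)) * (1/2) ^ n / (1 - 1/2)"
      by (rule geometric_increments_converge) simp_all
    then show ?thesis
      by (simp add: v_def limI mult_ac)
  qed
  show ?thesis
  proof
    show "weighted_le (4 * Vmax * (1/2) ^ n) v (picard_iter a n)" for n
      using err by (simp add: weighted_le_def)
    show "uniform_limit \<Omega> (picard_iter a) v sequentially"
    proof (rule uniform_limitI)
      fix e :: real assume "e > 0"
      have "(\<lambda>n. 4 * Vmax * exp (K * R) * (1/2) ^ n) \<longlonglongrightarrow> 4 * Vmax * exp (K * R) * 0"
        by (intro tendsto_intros) simp
      then have "\<forall>\<^sub>F n in sequentially. 4 * Vmax * exp (K * R) * (1/2) ^ n < e"
        using \<open>e > 0\<close> by (simp add: order_tendsto_iff)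
      then show "\<forall>\<^sub>F n in sequentially. \<forall>z\<in>\<Omega>. dist (picard_iter a n z) (v z) < e"
      proof (rule eventually_mono, intro ballI)
        fix n z assume small: "4 * Vmax * exp (K * R) * (1/2) ^ n < e" and z: "z \<in> \<Omega>"
        have "exp (K * norm z) \<le> exp (K * R)"
          using norm_le_R[OF z] K_pos by simp
        then have "4 * Vmax * (1/2) ^ n * exp (K * norm z) \<le> 4 * Vmax * exp (K * R) * (1/2) ^ n"
          using Vmax_ge_1 by (simp add: mult_left_mono)
        then show "dist (picard_iter a n z) (v z) < e"
          using err[OF z, of n] small by (simp add: dist_norm norm_minus_commute)
      qed
    qed
  qed
qed

lemma admissible_uniform_limit:
  assumes adm: "\<And>n. admissible (f n)" and lim: "uniform_limit \<Omega> f v sequentially"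
  shows "admissible v"
  unfolding admissible_def
proof (intro conjI ballI)
  show "v holomorphic_on \<Omega>"
  proof (rule holomorphic_uniform_sequence[OF open_\<Omega> admissible_holomorphic[OF adm]])
    fix z assume "z \<in> \<Omega>"
    then obtain d where "d > 0" "cball z d \<subseteq> \<Omega>"
      using open_\<Omega> open_contains_cball by blast
    then show "\<exists>d>0. cball z d \<subseteq> \<Omega> \<and> uniform_limit (cball z d) f v sequentially"
      using uniform_limit_on_subset[OF lim] by blast
  qed
  have pointwise: "(\<lambda>n. f n z) \<longlonglongrightarrow> v z" if "z \<in> \<Omega>" for z
    by (rule tendsto_uniform_limitI[OF lim that])
  fix z assume z: "z \<in> \<Omega>"
  have "(\<lambda>n. 1 + \<beta> * Re (f n z)) \<longlonglongrightarrow> 1 + \<beta> * Re (v z)"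
    by (intro tendsto_intros pointwise[OF z])
  then show "1/2 \<le> 1 + \<beta> * Re (v z)"
    by (rule LIMSEQ_le_const) (use admissible_Re_ge[OF adm z] in auto)
  show "norm (v z) \<le> Vmax"
    by (rule LIMSEQ_le_const2[OF tendsto_norm[OF pointwise[OF z]]]) (use admissible_norm_le[OF adm z] in auto)
next
  fix x assume "x \<in> {0..lam}"
  then have lim_x: "(\<lambda>n. f n (of_real x)) \<longlonglongrightarrow> v (of_real x)"
    by (intro tendsto_uniform_limitI[OF lim] of_real_in_\<Omega>)
  have "(\<lambda>n. Im (f n (of_real x))) \<longlonglongrightarrow> Im (v (of_real x))"
    by (intro tendsto_intros lim_x)
  then show "Im (v (of_real x)) = 0"
    using admissible_real[OF adm \<open>x \<in> {0..lam}\<close>] by (simp add: LIMSEQ_const_iff)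
  have "(\<lambda>n. Re (f n (of_real x))) \<longlonglongrightarrow> Re (v (of_real x))"
    by (intro tendsto_intros lim_x)
  then show "0 \<le> Re (v (of_real x))"
    by (rule LIMSEQ_le_const) (use admissible_real[OF adm \<open>x \<in> {0..lam}\<close>] in auto)
qed

lemma picard_fixed_exists:
  assumes "0 \<le> a" "a \<le> 1"
  obtains v where "picard_fixed a v"
proof -
  obtain v where lim: "uniform_limit \<Omega> (picard_iter a) v sequentially"
    and err: "\<And>n. weighted_le (4 * Vmax * (1/2) ^ n) v (picard_iter a n)"
    using picard_iter_limit[OF assms] by blast
  have v: "admissible v"
    by (rule admissible_uniform_limit[OF admissible_picard_iter[OF assms] lim])
  have "picard a v z = v z" if z: "z \<in> \<Omega>" for z
  proof (rule LIMSEQ_unique)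
    show "(\<lambda>n. picard_iter a (Suc n) z) \<longlonglongrightarrow> v z"
      using tendsto_uniform_limitI[OF lim z] by (rule LIMSEQ_Suc)
    have "weighted_le (4 * Vmax * (1/2) ^ n / 2) (picard a (picard_iter a n)) (picard a v)" for n
      by (rule picard_contraction[OF admissible_picard_iter[OF assms] v _ weighted_le_sym[OF err] assms])
        (use Vmax_ge_1 in simp)
    then have bound: "norm (picard_iter a (Suc n) z - picard a v z)
        \<le> 4 * Vmax * (1/2) ^ n / 2 * exp (K * norm z)" for n
      using z by (simp add: weighted_le_def picard_iter_Suc)
    have "(\<lambda>n. 4 * Vmax * (1/2) ^ n / 2 * exp (K * norm z)) \<longlonglongrightarrow> 4 * Vmax * 0 / 2 * exp (K * norm z)"
      by (intro tendsto_intros LIMSEQ_power_zero) simp_all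
    then have "(\<lambda>n. 4 * Vmax * (1/2) ^ n / 2 * exp (K * norm z)) \<longlonglongrightarrow> 0"
      by simp
    then have "(\<lambda>n. picard_iter a (Suc n) z - picard a v z) \<longlonglongrightarrow> 0"
      by (rule Lim_null_comparison[OF always_eventually, rotated]) (intro allI bound)
    then show "(\<lambda>n. picard_iter a (Suc n) z) \<longlonglongrightarrow> picard a v z"
      by (simp add: LIM_zero_iff)
  qed
  then have "picard_fixed a v"
    using v by (simp add: picard_fixed_def)
  then show ?thesis by (rule that)
qed

lemma picard_fixed_dependence:
  assumes v: "picard_fixed a v" and w: "picard_fixed b w" and "0 \<le> a" "a \<le> 1"
  shows "weighted_le (2 * Vmax * \<bar>a - b\<bar>) v w"
proof -
  have v_adm: "admissible v" and w_adm: "admissible w"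
    using v w by (auto simp: picard_fixed_def)
  have step: "weighted_le (D / 2 + \<bar>a - b\<bar> * Vmax) v w" if "D \<ge> 0" "weighted_le D v w" for D
  proof -
    have "weighted_le (D / 2 + \<bar>a - b\<bar> * Vmax) (picard a v) (picard b w)"
      by (rule weighted_le_triangle[OF picard_contraction[OF v_adm w_adm that assms(3,4)]
            picard_param_weighted[OF w_adm]])
    then show ?thesis
      using v w by (simp add: weighted_le_def picard_fixed_def)
  qed
  \<comment> \<open>The contraction improves any a priori bound on the distance, down to the size of the
    parameter perturbation.\<close>
  have bound: "weighted_le (2 * Vmax * (1/2) ^ n + 2 * Vmax * \<bar>a - b\<bar>) v w" for n
  proof (induction n)
    case 0
    show ?case
      by (rule weighted_le_mono[OF weighted_le_admissible[OF v_adm w_adm]]) (use Vmax_ge_1 in simp)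
  next
    case (Suc n)
    have "weighted_le ((2 * Vmax * (1/2) ^ n + 2 * Vmax * \<bar>a - b\<bar>) / 2 + \<bar>a - b\<bar> * Vmax) v w"
      using Vmax_ge_1 by (intro step Suc.IH) simp
    then show ?case
      by (rule weighted_le_mono) (simp add: algebra_simps)
  qed
  show ?thesis
    unfolding weighted_le_def
  proof
    fix z assume "z \<in> \<Omega>"
    have "(\<lambda>n. (2 * Vmax * (1/2) ^ n + 2 * Vmax * \<bar>a - b\<bar>) * exp (K * norm z))
        \<longlonglongrightarrow> (2 * Vmax * 0 + 2 * Vmax * \<bar>a - b\<bar>) * exp (K * norm z)"
      by (intro tendsto_intros LIMSEQ_power_zero) simp
    then have "norm (v z - w z) \<le> (2 * Vmax * 0 + 2 * Vmax * \<bar>a - b\<bar>) * exp (K * norm z)"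
      by (rule LIMSEQ_le_const) (use bound \<open>z \<in> \<Omega>\<close> in \<open>auto simp: weighted_le_def\<close>)
    then show "norm (v z - w z) \<le> 2 * Vmax * \<bar>a - b\<bar> * exp (K * norm z)"
      by simp
  qed
qed

definition "fixed_point a = (SOME v. picard_fixed a v)"

definition "shoot a = Re (fixed_point a (of_real lam))"

lemma picard_fixed_fixed_point: "0 \<le> a \<Longrightarrow> a \<le> 1 \<Longrightarrow> picard_fixed a (fixed_point a)"
  unfolding fixed_point_def by (metis picard_fixed_exists someI)

lemma lam_in_\<Omega>: "of_real lam \<in> \<Omega>"
  using of_real_in_\<Omega>[of lam] lam_pos by simp

lemma continuous_on_shoot: "continuous_on {0..1} shoot"
proof (rule lipschitz_on_continuous_on[OF lipschitz_onI])
  fix a b :: real assume "a \<in> {0..1}" "b \<in> {0..1}"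
  then have "weighted_le (2 * Vmax * \<bar>a - b\<bar>) (fixed_point a) (fixed_point b)"
    by (intro picard_fixed_dependence picard_fixed_fixed_point) auto
  then have "norm (fixed_point a (of_real lam) - fixed_point b (of_real lam))
      \<le> 2 * Vmax * \<bar>a - b\<bar> * exp (K * lam)"
    using lam_in_\<Omega> lam_pos by (auto simp: weighted_le_def)
  moreover have "dist (shoot a) (shoot b) \<le> norm (fixed_point a (of_real lam) - fixed_point b (of_real lam))"
    unfolding shoot_def dist_real_def
    using abs_Re_le_cmod[of "fixed_point a (of_real lam) - fixed_point b (of_real lam)"] by simp
  ultimately show "dist (shoot a) (shoot b) \<le> (2 * Vmax * exp (K * lam)) * dist a b"
    by (simp add: dist_real_def mult_ac)
qed (use Vmax_ge_1 in simp)

lemma shoot_0: "shoot 0 = 0"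
  using picard_fixed_fixed_point[of 0] lam_in_\<Omega> by (simp add: picard_fixed_def shoot_def picard_def)

lemma shoot_1: "1 \<le> shoot 1"
  using picard_fixed_fixed_point[of 1] lam_in_\<Omega> picard_real_ge[of "fixed_point 1" 1 lam] lam_pos
  by (simp add: picard_fixed_def shoot_def)

lemma shoot_hits_1: "\<exists>a. 0 \<le> a \<and> a \<le> 1 \<and> shoot a = 1"
  using IVT'[of shoot 0 1 1] shoot_0 shoot_1 continuous_on_shoot by auto

lemma picard_fixed_solves:
  assumes fixed: "picard_fixed a v" and at_lam: "Re (v (of_real lam)) = 1"
  shows "solves_problem lam \<beta> \<gamma> (\<lambda>t. Re (v (of_real t)))"
proof -
  have v: "admissible v" and fx: "\<And>z. z \<in> \<Omega> \<Longrightarrow> picard a v z = v z"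
    using fixed by (auto simp: picard_fixed_def)
  define y where "y t = Re (v (of_real t))" for t
  define y' where "y' t = \<gamma> * a * Re (slope v (of_real t))" for t
  have yd: "(y has_real_derivative y' t) (at t within S)" if "t \<in> {0..lam}" for t S
  proof -
    have "(v has_field_derivative of_real (\<gamma> * a) * slope v (of_real t)) (at (of_real t))"
      using has_field_derivative_picard[OF v of_real_in_\<Omega>[OF that]] open_\<Omega> of_real_in_\<Omega>[OF that] fx
      by (rule has_field_derivative_transform_within_open)
    then show ?thesis
      unfolding y_def y'_def using has_real_derivative_Re_of_real by fastforce
  qed
  \<comment> \<open>On the real segment the fixed point equation says that the flux is \<open>\<gamma> a\<close> times
    the flux factor.\<close>
  have flux_eq: "(1 + \<beta> * y t) * y' t = \<gamma> * a * Re (flux v (of_real t))" if "t \<in> {0..lam}" for t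
    using diffusivity_mult_Re_slope[OF v that] unfolding y_def y'_def by (metis mult.left_commute)
  have "((\<lambda>t. (1 + \<beta> * y t) * y' t) has_real_derivative - 2 * \<eta> * y' \<eta>) (at \<eta>)"
    if \<eta>: "\<eta> \<in> {0<..<lam}" for \<eta>
  proof -
    have "((\<lambda>t. \<gamma> * a * Re (flux v (of_real t))) has_real_derivative
        \<gamma> * a * (- 2 * \<eta> * Re (slope v (of_real \<eta>)))) (at \<eta>)"
      using \<eta> by (intro DERIV_cmult has_real_derivative_Re_flux[OF v]) auto
    moreover have "\<gamma> * a * (- 2 * \<eta> * Re (slope v (of_real \<eta>))) = - 2 * \<eta> * y' \<eta>"
      by (simp add: y'_def)
    ultimately have "((\<lambda>t. \<gamma> * a * Re (flux v (of_real t))) has_real_derivative - 2 * \<eta> * y' \<eta>) (at \<eta>)"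
      by (simp only:)
    then show ?thesis
      by (rule has_field_derivative_transform_within_open[where S = "{0<..<lam}"])
        (use \<eta> flux_eq in auto)
  qed
  moreover have "v 0 = of_real a"
    using fx[OF zero_in_\<Omega>] picard_at_0 by simp
  then have "y 0 = a"
    by (simp add: y_def)
  moreover have "flux v 0 = 1"
    by (simp add: flux_def flux_exponent_def)
  then have "y' 0 + \<beta> * y 0 * y' 0 - \<gamma> * y 0 = 0"
    using flux_eq[of 0] lam_pos \<open>y 0 = a\<close> by (simp add: algebra_simps)
  moreover have "y lam = 1"
    using at_lam by (simp add: y_def)
  ultimately have "solves_problem lam \<beta> \<gamma> y"
    unfolding solves_problem_def using yd by (intro exI[of _ y']) auto
  then show ?thesis
    by (simp add: y_def[abs_def])
qed

theorem exists_solution: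
  "\<exists>y. solves_problem lam \<beta> \<gamma> y \<and> (\<forall>\<eta>\<in>{0..lam}. y \<eta> \<ge> 0) \<and> real_analytic_on y {0..lam}"
proof -
  obtain a where a: "0 \<le> a" "a \<le> 1" "shoot a = 1"
    using shoot_hits_1 by blast
  then have v: "picard_fixed a (fixed_point a)"
    by (intro picard_fixed_fixed_point)
  then have "admissible (fixed_point a)"
    by (simp add: picard_fixed_def)
  moreover have "of_real ` {0..lam} \<subseteq> \<Omega>"
    using of_real_in_\<Omega> by blast
  ultimately show ?thesis
    using picard_fixed_solves[OF v] a(3) admissible_real
      real_analytic_on_Re_holomorphic[OF open_\<Omega> admissible_holomorphic]
    by (intro exI[of _ "\<lambda>t. Re (fixed_point a (of_real t))"]) (auto simp: shoot_def)
qed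

end

theorem theorem3p7:
  fixes lam \<gamma> \<beta> \<beta>1 :: real
  assumes "lam > 0" and "\<gamma> > 0"
    and "\<beta>1 > 0"
    and "sqrt pi / 2 * \<gamma> * \<beta>1 * sqrt (1 + \<beta>1) * (3 + \<beta>1) = 1"
    and "\<forall>x>0. sqrt pi / 2 * \<gamma> * x * sqrt (1 + x) * (3 + x) = 1 \<longrightarrow> x = \<beta>1"
    and "0 \<le> \<beta>" and "\<beta> < \<beta>1"
  shows "\<exists>y. solves_problem lam \<beta> \<gamma> y \<and> (\<forall>\<eta>\<in>{0..lam}. y \<eta> \<ge> 0)
              \<and> real_analytic_on y {0..lam}
              \<and> (\<forall>z. solves_problem lam \<beta> \<gamma> z \<and> (\<forall>\<eta>\<in>{0..lam}. z \<eta> \<ge> 0)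
                     \<and> real_analytic_on z {0..lam} \<longrightarrow> (\<forall>\<eta>\<in>{0..lam}. z \<eta> = y \<eta>))"
proof -
  \<comment> \<open>Uniqueness holds among all
    nonnegative solutions, analytic or not.\<close>
  interpret gme_params lam \<beta> \<gamma>
    using assms by unfold_locales auto
  obtain y where "solves_problem lam \<beta> \<gamma> y" "\<forall>\<eta>\<in>{0..lam}. y \<eta> \<ge> 0" "real_analytic_on y {0..lam}"
    using exists_solution by blast
  then show ?thesis
    using solves_problem_unique[OF assms(1,6,2)] by blast
qed

end
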